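(* Let $(E,|\cdot|)$ be a separable Banach space and $p\ge1$, and let $\mathcal C_0^{p\text{-var}}(\mathcal S_2^T;E)$ be the space of continuous maps $G:\mathcal S_2^T\to E$ with $G_{t,t}=0$ for all $t\in[0,T]$ and finite $p$-variation $\|G\|^p_{[0,T],p\text{-var}}=\sup_{0=t_0<t_1<\dots<t_N=T}\sum_{i=0}^{N-1}|G_{t_i,t_{i+1}}|^p<\infty$. For each $n\ge0$ let $Z^n=(Z^n_{s,t})_{(s,t)\in\mathcal S_2^T}$ be a process on $(\Omega_n,\mathcal F_n,\mathbb P_n)$ with trajectories in $\mathcal C_0^{p\text{-var}}(\mathcal S_2^T;E)$. Assume that the family of laws $(\mathbb P_n\circ(Z^n)^{-1})_{n\ge0}$ is tight in $C(\mathcal S_2^T;E)$ and that the family of laws $(\mathbb P_n\circ(\|Z^n\|_{[0,T],p\text{-var}})^{-1})_{n\ge0}$ is tight in $\mathbb R$. Then for any $p'>p$, the family of laws of $\mathcal S_2^T\ni(s,t)\mapsto\|Z^n\|_{[s,t],p'\text{-var}}\in\mathbb R$, $n\ge0$, is tight in $C(\mathcal S_2^T;\mathbb R)$; in particular, for any $\varepsilon>0$ there exists $\delta>0$ such that for all $n$, $$\mathbb P_n\Big(\sup_{(s,t)\in\mathcal S_2^T:\,t-s\le\delta}\|Z^n\|_{[s,t],p'\text{-var}}>\varepsilon\Big)<\varepsilon.$$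
   Context: $\mathcal S_2^T=\{(s,t)\in[0,T]^2:s\le t\}$; $\|G\|^{p'}_{[s,t],p'\text{-var}}=\sup\sum_i|G_{t_{i-1},t_i}|^{p'}$ over partitions $s=t_0<\dots<t_N=t$ of $[s,t]$. *)

theory Defs
  imports "HOL-Analysis.Analysis" "HOL-Probability.Probability"
begin

definition simplex2 :: "real \<Rightarrow> (real \<times> real) set" where
  "simplex2 T = {(s, t). 0 \<le> s \<and> s \<le> t \<and> t \<le> T}"

definition pvar_sums :: "real \<Rightarrow> (real \<times> real \<Rightarrow> 'e::real_normed_vector) \<Rightarrow> real \<Rightarrow> real \<Rightarrow> real set" where
  "pvar_sums p G s t =
     {(\<Sum>i<N. norm (G (u i, u (Suc i))) powr p) | u N.
        u 0 = s \<and> u N = t \<and> (\<forall>i<N. u i < u (Suc i))}"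

definition finite_pvar :: "real \<Rightarrow> (real \<times> real \<Rightarrow> 'e::real_normed_vector) \<Rightarrow> real \<Rightarrow> real \<Rightarrow> bool" where
  "finite_pvar p G s t \<longleftrightarrow> bdd_above (pvar_sums p G s t)"

definition pvar_norm :: "real \<Rightarrow> (real \<times> real \<Rightarrow> 'e::real_normed_vector) \<Rightarrow> real \<Rightarrow> real \<Rightarrow> real" where
  "pvar_norm p G s t = (Sup (pvar_sums p G s t)) powr (1 / p)"

text \<open>The metric space C(S;E) with the uniform metric (functions extensional on S).\<close>
definition Cspace :: "(real \<times> real) set \<Rightarrow> ((real \<times> real) \<Rightarrow> 'e::metric_space) metric" where
  "Cspace S = cfunspace (top_of_set S) euclidean_metric"

definition tight_C :: "(nat \<Rightarrow> 'a measure) \<Rightarrow> (real \<times> real) set \<Rightarrow> (nat \<Rightarrow> 'a \<Rightarrow> real \<times> real \<Rightarrow> 'e::metric_space) \<Rightarrow> bool" where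
  "tight_C M S X \<longleftrightarrow>
     (\<forall>\<epsilon>>0. \<exists>K. compactin (mtopology_of (Cspace S)) K \<and>
        (\<forall>n. measure (M n) {\<omega> \<in> space (M n). restrict (X n \<omega>) S \<in> K} \<ge> 1 - \<epsilon>))"

definition tight_R :: "(nat \<Rightarrow> 'a measure) \<Rightarrow> (nat \<Rightarrow> 'a \<Rightarrow> real) \<Rightarrow> bool" where
  "tight_R M Y \<longleftrightarrow>
     (\<forall>\<epsilon>>0. \<exists>K. compact K \<and> (\<forall>n. measure (M n) {\<omega> \<in> space (M n). Y n \<omega> \<in> K} \<ge> 1 - \<epsilon>))"

end

(*
  For p < p' the interpolation |x|^p' <= c^(p' - p) |x|^p shows that p'-variation sums over
  intervals on which |G| <= c are at most c^(p' - p) times the p-variation of G. Since G vanishes on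
  the diagonal, |G| is uniformly small on short intervals, so moving an endpoint of [s, t] a little
  changes the p'-variation by at most c^(p' - p) W plus the oscillation of |G|^p'. This gives a
  modulus of continuity of (s, t) |-> ||G||_[s,t],p'-var that is uniform over any family of paths
  which is compact in C(S_2^T) and has p-variation at most W. By the two tightness assumptions such
  a family carries probability at least 1 - eta for every n; on these events the p'-variation
  functions are uniformly bounded and equicontinuous, which yields tightness by Arzela-Ascoli, and
  together with their vanishing on the diagonal the small-increment estimate. Measurability
  follows by taking the supremum over partitions with rational points only.
*)

theory Submission
  imports Defs
begin

section \<open>Partitions and partition sums\<close>

definition is_partition :: "(nat \<Rightarrow> real) \<Rightarrow> nat \<Rightarrow> real \<Rightarrow> real \<Rightarrow> bool" where
  "is_partition u N s t \<longleftrightarrow> u 0 = s \<and> u N = t \<and> (\<forall>i<N. u i < u (Suc i))"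

definition partition_sum ::
    "real \<Rightarrow> (real \<times> real \<Rightarrow> 'e::real_normed_vector) \<Rightarrow> (nat \<Rightarrow> real) \<Rightarrow> nat \<Rightarrow> real" where
  "partition_sum p G u N = (\<Sum>i<N. norm (G (u i, u (Suc i))) powr p)"

definition pvar_sup :: "real \<Rightarrow> (real \<times> real \<Rightarrow> 'e::real_normed_vector) \<Rightarrow> real \<Rightarrow> real \<Rightarrow> real" where
  "pvar_sup p G s t = Sup (pvar_sums p G s t)"

lemma pvar_sums_eq: "pvar_sums p G s t = {partition_sum p G u N | u N. is_partition u N s t}"
  by (simp add: pvar_sums_def partition_sum_def is_partition_def)

lemma pvar_norm_eq: "pvar_norm p G s t = pvar_sup p G s t powr (1 / p)"
  by (simp add: pvar_norm_def pvar_sup_def)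

lemma is_partition_mono:
  assumes u: "is_partition u N s t" and "i \<le> j" "j \<le> N"
  shows "u i \<le> u j"
  using assms(2,3)
proof (induction j)
  case (Suc j)
  then show ?case
    using u by (cases "i = Suc j") (auto simp: is_partition_def intro: order_trans[OF _ less_imp_le])
qed simp

lemma is_partition_range:
  assumes "is_partition u N s t" "i \<le> N"
  shows "s \<le> u i" "u i \<le> t"
  using is_partition_mono[OF assms(1), of 0 i] is_partition_mono[OF assms(1), of i N] assms
  by (auto simp: is_partition_def)

lemma is_partition_interval:
  assumes "is_partition u N s t" "i < N"
  shows "s \<le> u i" "u i \<le> u (Suc i)" "u (Suc i) \<le> t"
  using is_partition_range[OF assms(1), of i] is_partition_range[OF assms(1), of "Suc i"] assms
  by (auto simp: is_partition_def less_imp_le)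

lemma is_partition_same_endpoints: "is_partition u N s s \<Longrightarrow> N = 0"
  using is_partition_mono[of u N s s 1 N] by (cases N) (auto simp: is_partition_def)

lemma pvar_sums_same_endpoints: "pvar_sums p G s s = {0}"
proof -
  have "is_partition (\<lambda>_. s) 0 s s" by (simp add: is_partition_def)
  moreover have "partition_sum p G u N = 0" if "is_partition u N s s" for u N
    using is_partition_same_endpoints[OF that] by (simp add: partition_sum_def)
  ultimately show ?thesis unfolding pvar_sums_eq by force
qed

lemma pvar_norm_same_endpoints: "pvar_norm p G s s = 0"
  by (simp add: pvar_norm_def pvar_sums_same_endpoints)

lemma partition_sum_nonneg: "0 \<le> partition_sum p G u N"
  by (simp add: partition_sum_def sum_nonneg)

lemma pvar_sums_nonempty: "s \<le> t \<Longrightarrow> pvar_sums p G s t \<noteq> {}"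
proof (cases "s = t")
  case False
  assume "s \<le> t"
  with False have "is_partition (\<lambda>i. if i = 0 then s else t) 1 s t"
    by (simp add: is_partition_def)
  then show ?thesis by (auto simp: pvar_sums_eq)
qed (simp add: pvar_sums_same_endpoints)

lemma is_partition_cons:
  assumes "is_partition v M b c" "a < b"
  shows "is_partition (\<lambda>i. if i = 0 then a else v (i - 1)) (Suc M) a c"
  using assms by (auto simp: is_partition_def less_Suc_eq_0_disj)

lemma partition_sum_cons:
  "partition_sum p G (\<lambda>i. if i = 0 then a else v (i - 1)) (Suc M)
     = norm (G (a, v 0)) powr p + partition_sum p G v M"
  unfolding partition_sum_def by (subst sum.lessThan_Suc_shift) simp

lemma is_partition_snoc:
  assumes "is_partition u N a b" "b < c"
  shows "is_partition (u(Suc N := c)) (Suc N) a c"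
  using assms by (auto simp: is_partition_def less_Suc_eq)

lemma partition_sum_snoc:
  "partition_sum p G (u(Suc N := c)) (Suc N) = partition_sum p G u N + norm (G (u N, c)) powr p"
  by (simp add: partition_sum_def)

lemma pvar_sums_extend_le:
  assumes "y \<in> pvar_sums p G s' t'" "s \<le> s'" "t' \<le> t"
  shows "\<exists>x\<in>pvar_sums p G s t. y \<le> x"
proof -
  obtain v M where v: "is_partition v M s' t'" and y: "y = partition_sum p G v M"
    using assms(1) by (auto simp: pvar_sums_eq)
  obtain v' M' where v': "is_partition v' M' s t'" and y': "y \<le> partition_sum p G v' M'"
  proof (cases "s = s'")
    case False
    with assms(2) have "s < s'" by simp
    then have "is_partition (\<lambda>i. if i = 0 then s else v (i - 1)) (Suc M) s t'"
      using is_partition_cons[OF v] by simp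
    moreover have "y \<le> partition_sum p G (\<lambda>i. if i = 0 then s else v (i - 1)) (Suc M)"
      using partition_sum_cons[of p G s v M] y by simp
    ultimately show ?thesis by (rule that)
  qed (use v y in auto)
  obtain v'' M'' where "is_partition v'' M'' s t" "y \<le> partition_sum p G v'' M''"
  proof (cases "t = t'")
    case False
    with assms(3) have "t' < t" by simp
    then have "is_partition (v'(Suc M' := t)) (Suc M') s t"
      using is_partition_snoc[OF v'] by simp
    moreover have "y \<le> partition_sum p G (v'(Suc M' := t)) (Suc M')"
      using partition_sum_snoc[of p G v' M' t] y' by (simp add: add_increasing2)
    ultimately show ?thesis by (rule that)
  qed (use v' y' in auto)
  then show ?thesis by (auto simp: pvar_sums_eq)
qed

lemma is_partition_locate_left:
  assumes u: "is_partition u N s t" and "s \<le> r" "r < t"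
  obtains k where "k < N" "u k \<le> r" "r < u (Suc k)"
proof -
  define I where "I = {i. i < N \<and> u i \<le> r}"
  define k where "k = Max I"
  have "N > 0" using u assms by (cases N) (auto simp: is_partition_def)
  then have "0 \<in> I" using u assms by (simp add: I_def is_partition_def)
  moreover have "finite I" by (simp add: I_def)
  ultimately have "k \<in> I" and k_max: "\<And>i. i \<in> I \<Longrightarrow> i \<le> k"
    unfolding k_def using Max_in Max_ge by blast+
  then have k: "k < N" "u k \<le> r" by (auto simp: I_def)
  have "r < u (Suc k)"
  proof (cases "Suc k < N")
    case True
    then show ?thesis using k_max[of "Suc k"] by (force simp: I_def)
  next
    case False
    then have "Suc k = N" using k by simp
    then show ?thesis using u assms by (simp add: is_partition_def)
  qed
  with k show thesis by (rule that)
qed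

lemma is_partition_locate_right:
  assumes u: "is_partition u N s t" and "s < r" "r \<le> t"
  obtains k where "k < N" "u k < r" "r \<le> u (Suc k)"
proof -
  define I where "I = {i. i \<le> N \<and> r \<le> u i}"
  define k' where "k' = Min I"
  have "N \<in> I" using u assms by (simp add: I_def is_partition_def)
  moreover have "finite I" by (simp add: I_def)
  ultimately have "k' \<in> I" and k'_min: "\<And>i. i \<in> I \<Longrightarrow> k' \<le> i"
    unfolding k'_def using Min_in Min_le by blast+
  then have k': "k' \<le> N" "r \<le> u k'" by (auto simp: I_def)
  obtain k where k: "k' = Suc k"
    using k' u assms by (cases k') (auto simp: is_partition_def)
  have "u k < r" using k'_min[of k] k k' by (force simp: I_def)
  with k k' show thesis by (intro that) auto
qed

lemma is_partition_prefix: "is_partition u N s t \<Longrightarrow> k \<le> N \<Longrightarrow> is_partition u k s (u k)"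
  by (simp add: is_partition_def)

lemma is_partition_suffix:
  "is_partition u (k + m) s t \<Longrightarrow> is_partition (\<lambda>j. u (k + j)) m (u k) t"
  by (simp add: is_partition_def)

lemma sum_lessThan_add: "(\<Sum>i<k + m. f i) = (\<Sum>i<k. f i) + (\<Sum>j<m. f (k + j))"
  for f :: "nat \<Rightarrow> 'a::comm_monoid_add"
  by (induction m) (auto simp: add.assoc)

lemma partition_sum_append:
  "partition_sum p G u (k + m) = partition_sum p G u k + partition_sum p G (\<lambda>j. u (k + j)) m"
  by (simp add: partition_sum_def sum_lessThan_add)

lemma powr_interpolate_le:
  fixes x c p p' :: real
  assumes "0 \<le> x" "x \<le> c" "p \<le> p'" "0 < p"
  shows "x powr p' \<le> c powr (p' - p) * x powr p"
proof (cases "x = 0")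
  case False
  then have "x powr p' = x powr (p' - p) * x powr p" by (simp add: powr_add[symmetric])
  also have "\<dots> \<le> c powr (p' - p) * x powr p"
    using assms False by (intro mult_right_mono powr_mono2) auto
  finally show ?thesis .
qed (use assms in simp)

lemma partition_sum_exponent_le:
  assumes "\<And>i. i < N \<Longrightarrow> norm (G (u i, u (Suc i))) \<le> c" "p \<le> p'" "0 < p"
  shows "partition_sum p' G u N \<le> c powr (p' - p) * partition_sum p G u N"
  unfolding partition_sum_def sum_distrib_left
  by (rule sum_mono) (use assms in \<open>auto intro: powr_interpolate_le\<close>)

section \<open>Deterministic estimates for the p'-variation\<close>

locale pvar_estimates =
  fixes G :: "real \<times> real \<Rightarrow> 'e::real_normed_vector" and T p p' B W :: real
  assumes exponents: "0 < p" "p \<le> p'"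
    and norm_le_bound: "\<And>x. x \<in> simplex2 T \<Longrightarrow> norm (G x) \<le> B"
    and pvar_sums_le_bound: "\<And>x. x \<in> pvar_sums p G 0 T \<Longrightarrow> x \<le> W"
begin

lemma partition_sum_le_bound:
  assumes u: "is_partition u N s t" and "0 \<le> s" "t \<le> T"
  shows "partition_sum p G u N \<le> W"
proof -
  have "partition_sum p G u N \<in> pvar_sums p G s t" using u by (auto simp: pvar_sums_eq)
  then show ?thesis
    using pvar_sums_extend_le[of _ p G s t 0 T] assms pvar_sums_le_bound by force
qed

lemma pvar_sums_exponent_le_bound:
  assumes "0 \<le> s" "t \<le> T" and y: "y \<in> pvar_sums p' G s t"
  shows "y \<le> B powr (p' - p) * W"
proof -
  obtain u N where u: "is_partition u N s t" and y_eq: "y = partition_sum p' G u N"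
    using y by (auto simp: pvar_sums_eq)
  have "y \<le> B powr (p' - p) * partition_sum p G u N"
    unfolding y_eq
  proof (intro partition_sum_exponent_le norm_le_bound)
    fix i assume "i < N"
    then show "(u i, u (Suc i)) \<in> simplex2 T"
      using is_partition_interval[OF u] assms by (fastforce simp: simplex2_def)
  qed (use exponents in auto)
  also have "\<dots> \<le> B powr (p' - p) * W"
    using partition_sum_le_bound[OF u] assms by (intro mult_left_mono) auto
  finally show ?thesis .
qed

lemma bdd_above_pvar_sums: "0 \<le> s \<Longrightarrow> t \<le> T \<Longrightarrow> bdd_above (pvar_sums p' G s t)"
  using pvar_sums_exponent_le_bound by (intro bdd_aboveI) blast

lemma pvar_sup_upper:
  "y \<in> pvar_sums p' G s t \<Longrightarrow> 0 \<le> s \<Longrightarrow> t \<le> T \<Longrightarrow> y \<le> pvar_sup p' G s t"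
  unfolding pvar_sup_def using bdd_above_pvar_sums by (intro cSup_upper)

lemma pvar_sup_nonneg:
  assumes "0 \<le> s" "s \<le> t" "t \<le> T"
  shows "0 \<le> pvar_sup p' G s t"
proof -
  obtain y where "y \<in> pvar_sums p' G s t" using pvar_sums_nonempty[OF assms(2)] by blast
  then show ?thesis
    using pvar_sup_upper assms by (force simp: pvar_sums_eq intro: order_trans[OF partition_sum_nonneg])
qed

lemma pvar_sup_le_bound:
  assumes "0 \<le> s" "s \<le> t" "t \<le> T"
  shows "pvar_sup p' G s t \<le> B powr (p' - p) * W"
  unfolding pvar_sup_def using pvar_sums_nonempty[OF assms(2)] pvar_sums_exponent_le_bound assms
  by (intro cSup_least) auto

lemma pvar_sup_mono:
  assumes "0 \<le> s" "s \<le> s'" "s' \<le> t'" "t' \<le> t" "t \<le> T"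
  shows "pvar_sup p' G s' t' \<le> pvar_sup p' G s t"
  unfolding pvar_sup_def using assms
  by (intro cSup_mono pvar_sums_nonempty bdd_above_pvar_sums pvar_sums_extend_le) auto

context
  fixes h c d :: real
  assumes short_norm_le: "\<And>a b. 0 \<le> a \<Longrightarrow> a \<le> b \<Longrightarrow> b \<le> T \<Longrightarrow> b - a \<le> h \<Longrightarrow> norm (G (a, b)) \<le> c"
    and close_powr_dist: "\<And>x y. x \<in> simplex2 T \<Longrightarrow> y \<in> simplex2 T \<Longrightarrow> dist x y \<le> h \<Longrightarrow>
                 \<bar>norm (G x) powr p' - norm (G y) powr p'\<bar> \<le> d"
    and moduli_nonneg: "0 \<le> c" "0 \<le> d"
begin

lemma partition_sum_short_le:
  assumes u: "is_partition u N s t" and "0 \<le> s" "t \<le> T" "t - s \<le> h"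
  shows "partition_sum p' G u N \<le> c powr (p' - p) * W"
proof -
  have "partition_sum p' G u N \<le> c powr (p' - p) * partition_sum p G u N"
  proof (intro partition_sum_exponent_le short_norm_le)
    fix i assume "i < N"
    from is_partition_interval[OF u this] assms
    show "0 \<le> u i" "u i \<le> u (Suc i)" "u (Suc i) \<le> T" "u (Suc i) - u i \<le> h" by auto
  qed (use exponents in auto)
  also have "\<dots> \<le> c powr (p' - p) * W"
    using partition_sum_le_bound[OF u] assms by (intro mult_left_mono) auto
  finally show ?thesis .
qed

text \<open>Moving the left endpoint from \<open>s\<close> to \<open>s'\<close> only affects the intervals of \<open>u\<close>
  inside \<open>[s, s']\<close>: they are short, so by interpolation they contribute at most
  \<open>c powr (p' - p) * W\<close>, and the interval straddling \<open>s'\<close> is shortened at a cost of at most \<open>d\<close>.\<close>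

lemma partition_sum_move_left:
  assumes u: "is_partition u N s t" and "0 \<le> s" "s \<le> s'" "s' < t" "t \<le> T" "s' - s \<le> h"
  shows "\<exists>y\<in>pvar_sums p' G s' t. partition_sum p' G u N \<le> c powr (p' - p) * W + d + y"
proof -
  obtain k where k: "k < N" "u k \<le> s'" "s' < u (Suc k)"
    using is_partition_locate_left[OF u] assms by blast
  then obtain m where N: "N = Suc k + m" using less_imp_Suc_add by blast
  define w where "w = (\<lambda>j. u (Suc k + j))"
  have w: "is_partition w m (u (Suc k)) t"
    unfolding w_def by (rule is_partition_suffix) (use u N in simp)
  have "partition_sum p' G u k \<le> c powr (p' - p) * W"
    using k assms by (intro partition_sum_short_le[OF is_partition_prefix[OF u]]) auto
  moreover have "\<bar>norm (G (u k, u (Suc k))) powr p' - norm (G (s', u (Suc k))) powr p'\<bar> \<le> d"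
    using is_partition_interval[OF u k(1)] k assms
    by (intro close_powr_dist) (auto simp: simplex2_def dist_Pair_Pair dist_real_def)
  moreover have "partition_sum p' G u N
      = partition_sum p' G u k + norm (G (u k, u (Suc k))) powr p' + partition_sum p' G w m"
    unfolding N partition_sum_append w_def by (simp add: partition_sum_def)
  moreover have "partition_sum p' G (\<lambda>i. if i = 0 then s' else w (i - 1)) (Suc m) \<in> pvar_sums p' G s' t"
    using is_partition_cons[OF w k(3)] by (auto simp: pvar_sums_eq)
  ultimately show ?thesis
    by (intro bexI[of _ "partition_sum p' G (\<lambda>i. if i = 0 then s' else w (i - 1)) (Suc m)"])
      (auto simp: partition_sum_cons w_def)
qed

lemma partition_sum_move_right:
  assumes u: "is_partition u N s t" and "0 \<le> s" "s < t'" "t' \<le> t" "t \<le> T" "t - t' \<le> h"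
  shows "\<exists>y\<in>pvar_sums p' G s t'. partition_sum p' G u N \<le> c powr (p' - p) * W + d + y"
proof -
  obtain k where k: "k < N" "u k < t'" "t' \<le> u (Suc k)"
    using is_partition_locate_right[OF u] assms by blast
  then obtain m where N: "N = Suc k + m" using less_imp_Suc_add by blast
  define w where "w = (\<lambda>j. u (Suc k + j))"
  have w: "is_partition w m (u (Suc k)) t"
    unfolding w_def by (rule is_partition_suffix) (use u N in simp)
  have "partition_sum p' G w m \<le> c powr (p' - p) * W"
    using k assms by (intro partition_sum_short_le[OF w]) auto
  moreover have "\<bar>norm (G (u k, u (Suc k))) powr p' - norm (G (u k, t')) powr p'\<bar> \<le> d"
    using is_partition_interval[OF u k(1)] k assms
    by (intro close_powr_dist) (auto simp: simplex2_def dist_Pair_Pair dist_real_def)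
  moreover have "partition_sum p' G u N
      = partition_sum p' G u k + norm (G (u k, u (Suc k))) powr p' + partition_sum p' G w m"
    unfolding N partition_sum_append w_def by (simp add: partition_sum_def)
  moreover have "is_partition (u(Suc k := t')) (Suc k) s t'"
    using is_partition_snoc[OF is_partition_prefix[OF u, of k] k(2)] k by simp
  then have "partition_sum p' G (u(Suc k := t')) (Suc k) \<in> pvar_sums p' G s t'"
    by (auto simp: pvar_sums_eq)
  ultimately show ?thesis
    by (intro bexI[of _ "partition_sum p' G (u(Suc k := t')) (Suc k)"])
      (auto simp: partition_sum_snoc)
qed

lemma pvar_sup_shrink_left_le:
  assumes "0 \<le> s" "s \<le> s'" "s' \<le> t" "t \<le> T" "s' - s \<le> h"
  shows "pvar_sup p' G s t \<le> pvar_sup p' G s' t + (c powr (p' - p) * W + d)"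
  unfolding pvar_sup_def
proof (rule cSup_least)
  show "pvar_sums p' G s t \<noteq> {}" using assms by (intro pvar_sums_nonempty) auto
  fix x assume "x \<in> pvar_sums p' G s t"
  then obtain u N where u: "is_partition u N s t" and x: "x = partition_sum p' G u N"
    by (auto simp: pvar_sums_eq)
  show "x \<le> Sup (pvar_sums p' G s' t) + (c powr (p' - p) * W + d)"
  proof (cases "s' = t")
    case True
    then show ?thesis
      using partition_sum_short_le[OF u] assms moduli_nonneg x by (simp add: pvar_sums_same_endpoints)
  next
    case False
    with assms obtain y where "y \<in> pvar_sums p' G s' t" "x \<le> c powr (p' - p) * W + d + y"
      using partition_sum_move_left[OF u] x by force
    then show ?thesis using pvar_sup_upper[of y s' t] assms by (simp add: pvar_sup_def)
  qed
qed

lemma pvar_sup_shrink_right_le: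
  assumes "0 \<le> s" "s \<le> t'" "t' \<le> t" "t \<le> T" "t - t' \<le> h"
  shows "pvar_sup p' G s t \<le> pvar_sup p' G s t' + (c powr (p' - p) * W + d)"
  unfolding pvar_sup_def
proof (rule cSup_least)
  show "pvar_sums p' G s t \<noteq> {}" using assms by (intro pvar_sums_nonempty) auto
  fix x assume "x \<in> pvar_sums p' G s t"
  then obtain u N where u: "is_partition u N s t" and x: "x = partition_sum p' G u N"
    by (auto simp: pvar_sums_eq)
  show "x \<le> Sup (pvar_sums p' G s t') + (c powr (p' - p) * W + d)"
  proof (cases "s = t'")
    case True
    then show ?thesis
      using partition_sum_short_le[OF u] assms moduli_nonneg x by (simp add: pvar_sums_same_endpoints)
  next
    case False
    with assms obtain y where "y \<in> pvar_sums p' G s t'" "x \<le> c powr (p' - p) * W + d + y"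
      using partition_sum_move_right[OF u] x by force
    then show ?thesis using pvar_sup_upper[of y s t'] assms by (simp add: pvar_sup_def)
  qed
qed

lemma pvar_sup_left_dist:
  assumes "0 \<le> a" "0 \<le> b" "a \<le> t" "b \<le> t" "t \<le> T" "\<bar>a - b\<bar> \<le> h"
  shows "\<bar>pvar_sup p' G a t - pvar_sup p' G b t\<bar> \<le> c powr (p' - p) * W + d"
  using pvar_sup_mono[of a b t t] pvar_sup_shrink_left_le[of a b t]
    pvar_sup_mono[of b a t t] pvar_sup_shrink_left_le[of b a t] assms
  by (cases "a \<le> b") auto

lemma pvar_sup_right_dist:
  assumes "0 \<le> s" "s \<le> a" "s \<le> b" "a \<le> T" "b \<le> T" "\<bar>a - b\<bar> \<le> h"
  shows "\<bar>pvar_sup p' G s a - pvar_sup p' G s b\<bar> \<le> c powr (p' - p) * W + d"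
  using pvar_sup_mono[of s s a b] pvar_sup_shrink_right_le[of s a b]
    pvar_sup_mono[of s s b a] pvar_sup_shrink_right_le[of s b a] assms
  by (cases "a \<le> b") auto

lemma pvar_sup_dist:
  assumes "(s, t) \<in> simplex2 T" "(s', t') \<in> simplex2 T" "dist (s, t) (s', t') \<le> h"
  shows "\<bar>pvar_sup p' G s t - pvar_sup p' G s' t'\<bar> \<le> 2 * (c powr (p' - p) * W + d)"
proof -
  have "\<bar>s - s'\<bar> \<le> h" "\<bar>t - t'\<bar> \<le> h"
    using dist_fst_le[of "(s, t)" "(s', t')"] dist_snd_le[of "(s, t)" "(s', t')"] assms(3)
    by (auto simp: dist_real_def)
  with assms(1,2) show ?thesis
    using pvar_sup_left_dist[of s s' t] pvar_sup_right_dist[of s' t t']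
      pvar_sup_right_dist[of s t t'] pvar_sup_left_dist[of s s' t']
    by (cases "s' \<le> t") (auto simp: simplex2_def)
qed

end

end

section \<open>Equicontinuity and compactness in \<open>C(S)\<close>\<close>

definition uniformly_equicontinuous_on :: "'a::metric_space set \<Rightarrow> ('a \<Rightarrow> 'b::metric_space) set \<Rightarrow> bool" where
  "uniformly_equicontinuous_on S F \<longleftrightarrow>
     (\<forall>e>0. \<exists>h>0. \<forall>f\<in>F. \<forall>x\<in>S. \<forall>y\<in>S. dist x y \<le> h \<longrightarrow> dist (f x) (f y) \<le> e)"

lemma uniformly_equicontinuous_onD:
  assumes "uniformly_equicontinuous_on S F" "e > 0"
  obtains h where "h > 0" "\<And>f x y. f \<in> F \<Longrightarrow> x \<in> S \<Longrightarrow> y \<in> S \<Longrightarrow> dist x y \<le> h \<Longrightarrow> dist (f x) (f y) \<le> e"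
  using assms unfolding uniformly_equicontinuous_on_def by metis

lemma uniformly_equicontinuous_on_imp_continuous_on:
  assumes "uniformly_equicontinuous_on S F" "f \<in> F"
  shows "continuous_on S f"
  unfolding continuous_on_iff
proof (intro ballI allI impI)
  fix x and e :: real assume "x \<in> S" "e > 0"
  then obtain h where h: "h > 0" "\<And>y. y \<in> S \<Longrightarrow> dist y x \<le> h \<Longrightarrow> dist (f y) (f x) \<le> e / 2"
    using uniformly_equicontinuous_onD[OF assms(1), of "e / 2"] assms(2) by (metis half_gt_zero)
  with \<open>e > 0\<close> show "\<exists>d>0. \<forall>y\<in>S. dist y x < d \<longrightarrow> dist (f y) (f x) < e"
    by (intro exI[of _ h]) (auto intro: le_less_trans[OF h(2)])
qed

lemma uniformly_equicontinuous_on_compose: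
  assumes F: "uniformly_equicontinuous_on S F" and g: "uniformly_continuous_on A g"
    and range: "\<And>f. f \<in> F \<Longrightarrow> f ` S \<subseteq> A"
  shows "uniformly_equicontinuous_on S ((\<lambda>f. g \<circ> f) ` F)"
  unfolding uniformly_equicontinuous_on_def
proof (intro allI impI)
  fix e :: real assume "e > 0"
  then obtain \<eta> where \<eta>: "\<eta> > 0" "\<And>a b. a \<in> A \<Longrightarrow> b \<in> A \<Longrightarrow> dist a b < \<eta> \<Longrightarrow> dist (g a) (g b) < e"
    using g unfolding uniformly_continuous_on_def by (metis dist_commute)
  obtain h where h: "h > 0"
    "\<And>f x y. f \<in> F \<Longrightarrow> x \<in> S \<Longrightarrow> y \<in> S \<Longrightarrow> dist x y \<le> h \<Longrightarrow> dist (f x) (f y) \<le> \<eta> / 2"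
    using uniformly_equicontinuous_onD[OF F, of "\<eta> / 2"] \<eta>(1) by (metis half_gt_zero)
  have "dist ((g \<circ> f) x) ((g \<circ> f) y) \<le> e" if "f \<in> F" "x \<in> S" "y \<in> S" "dist x y \<le> h" for f x y
  proof -
    have "f x \<in> A" "f y \<in> A" using range[OF \<open>f \<in> F\<close>] that(2,3) by auto
    moreover have "dist (f x) (f y) < \<eta>" using h(2)[OF that] \<eta>(1) by linarith
    ultimately show ?thesis using \<eta>(2) by (simp add: less_imp_le)
  qed
  with h(1) show "\<exists>h>0. \<forall>f\<in>(\<lambda>f. g \<circ> f) ` F. \<forall>x\<in>S. \<forall>y\<in>S. dist x y \<le> h \<longrightarrow> dist (f x) (f y) \<le> e"
    by blast
qed

lemma uniformly_equicontinuous_on_modulus_seq: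
  assumes "uniformly_equicontinuous_on S F"
  obtains \<delta> where "\<And>k. \<delta> k > 0" "\<And>k f x y. f \<in> F \<Longrightarrow> x \<in> S \<Longrightarrow> y \<in> S \<Longrightarrow> dist x y \<le> \<delta> k \<Longrightarrow>
    dist (f x) (f y) \<le> 1 / real (Suc k)"
proof -
  have "\<forall>k. \<exists>h>0. \<forall>f\<in>F. \<forall>x\<in>S. \<forall>y\<in>S. dist x y \<le> h \<longrightarrow> dist (f x) (f y) \<le> 1 / real (Suc k)"
    using assms unfolding uniformly_equicontinuous_on_def by simp
  then obtain \<delta> where "\<forall>k. \<delta> k > 0 \<and> (\<forall>f\<in>F. \<forall>x\<in>S. \<forall>y\<in>S. dist x y \<le> \<delta> k \<longrightarrow> dist (f x) (f y) \<le> 1 / real (Suc k))"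
    by (metis choice)
  then show thesis by (intro that) blast+
qed

lemma uniformly_equicontinuous_on_finite:
  assumes "finite F" "\<And>f. f \<in> F \<Longrightarrow> uniformly_continuous_on S f"
  shows "uniformly_equicontinuous_on S F"
  using assms
proof (induction F rule: finite_induct)
  case empty
  show ?case by (auto simp: uniformly_equicontinuous_on_def intro: exI[of _ 1])
next
  case (insert g F)
  show ?case
    unfolding uniformly_equicontinuous_on_def
  proof (intro allI impI)
    fix e :: real assume "e > 0"
    obtain h1 where h1: "h1 > 0"
      "\<And>f x y. f \<in> F \<Longrightarrow> x \<in> S \<Longrightarrow> y \<in> S \<Longrightarrow> dist x y \<le> h1 \<Longrightarrow> dist (f x) (f y) \<le> e"
      using uniformly_equicontinuous_onD[OF insert.IH \<open>e > 0\<close>] insert.prems by blast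
    obtain h2 where h2: "h2 > 0" "\<And>x y. x \<in> S \<Longrightarrow> y \<in> S \<Longrightarrow> dist x y < h2 \<Longrightarrow> dist (g x) (g y) < e"
      using insert.prems[of g] \<open>e > 0\<close> unfolding uniformly_continuous_on_def by (metis dist_commute insertI1)
    have "dist (f x) (f y) \<le> e"
      if "f \<in> insert g F" "x \<in> S" "y \<in> S" "dist x y \<le> min h1 (h2 / 2)" for f x y
    proof (cases "f = g")
      case True
      with that h2 show ?thesis by (simp add: less_imp_le)
    next
      case False
      with that h1 show ?thesis by simp
    qed
    with h1(1) h2(1) show "\<exists>h>0. \<forall>f\<in>insert g F. \<forall>x\<in>S. \<forall>y\<in>S. dist x y \<le> h \<longrightarrow> dist (f x) (f y) \<le> e"
      by (intro exI[of _ "min h1 (h2 / 2)"]) auto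
  qed
qed

lemma compact_simplex2: "compact (simplex2 T)"
proof -
  have "simplex2 T = {x. fst x \<le> snd x} \<inter> ({0..T} \<times> {0..T})"
    by (auto simp: simplex2_def)
  moreover have "closed {x::real \<times> real. fst x \<le> snd x}"
    by (intro closed_Collect_le continuous_intros)
  ultimately show ?thesis by (simp add: closed_Int_compact compact_Times)
qed

lemma restrict_in_Cspace:
  assumes "compact S" "continuous_on S f"
  shows "restrict f S \<in> mspace (Cspace S)"
proof -
  have "continuous_on S (restrict f S) \<longleftrightarrow> continuous_on S f" by (rule continuous_on_cong) auto
  moreover have "restrict f S ` S = f ` S" by auto
  moreover have "bounded (f ` S)" by (rule compact_imp_bounded[OF compact_continuous_image[OF assms(2,1)]])
  ultimately show ?thesis using assms(2) by (simp add: Cspace_def)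
qed

lemma Cspace_dist_lt:
  assumes "compact S" "f \<in> mspace (Cspace S)" "g \<in> mspace (Cspace S)" "mdist (Cspace S) f g < a" "x \<in> S"
  shows "dist (f x) (g x) < a"
  using cfunspace_mdist_lt[of "top_of_set S" f euclidean_metric g a x] assms
  by (simp add: Cspace_def compactin_subtopology)

lemma Cspace_mcomplete:
  "Metric_space.mcomplete (mspace (Cspace S)) (mdist (Cspace S :: ((real \<times> real) \<Rightarrow> real) metric))"
proof -
  have "mcomplete_of (cfunspace (top_of_set S) (Met_TC.Self :: real metric))"
    by (rule Met_TC.mcomplete_cfunspace) (simp add: complete_UNIV)
  moreover have "(Met_TC.Self :: real metric) = euclidean_metric"
    by (simp add: Met_TC.Self_def euclidean_metric_def)
  ultimately show ?thesis by (simp add: mcomplete_of_def Cspace_def)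
qed

lemma compactin_Cspace_finite_net:
  fixes K :: "(real \<times> real \<Rightarrow> 'e::real_normed_vector) set"
  assumes S: "compact S" and K: "compactin (mtopology_of (Cspace S)) K" and "e > 0"
  obtains F where "finite F" "F \<subseteq> K" "\<And>f. f \<in> K \<Longrightarrow> \<exists>g\<in>F. \<forall>x\<in>S. dist (f x) (g x) < e"
proof -
  interpret C: Metric_space "mspace (Cspace S)" "mdist (Cspace S)" by simp
  have "C.mtotally_bounded K"
    using K unfolding mtopology_of_def by (rule C.compactin_imp_mtotally_bounded)
  then have "\<exists>F. finite F \<and> F \<subseteq> K \<and> K \<subseteq> (\<Union>g\<in>F. C.mball g e)"
    using \<open>e > 0\<close> unfolding C.mtotally_bounded_def by simp
  then obtain F where F: "finite F" "F \<subseteq> K" "K \<subseteq> (\<Union>g\<in>F. C.mball g e)"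
    by (elim exE conjE)
  have "\<exists>g\<in>F. \<forall>x\<in>S. dist (f x) (g x) < e" if "f \<in> K" for f
  proof -
    obtain g where g: "g \<in> F" "f \<in> C.mball g e" using F(3) \<open>f \<in> K\<close> by blast
    then have "\<forall>x\<in>S. dist (g x) (f x) < e" using Cspace_dist_lt[OF S, of g f e] by simp
    with g(1) show ?thesis by (metis dist_commute)
  qed
  then show thesis by (rule that[OF F(1,2)])
qed

lemma compactin_Cspace_bounded:
  fixes K :: "(real \<times> real \<Rightarrow> 'e::real_normed_vector) set"
  assumes S: "compact S" and K: "compactin (mtopology_of (Cspace S)) K"
  obtains B where "\<And>f x. f \<in> K \<Longrightarrow> x \<in> S \<Longrightarrow> norm (f x) \<le> B"
proof -
  obtain F where F: "finite F" "F \<subseteq> K" and net: "\<And>f. f \<in> K \<Longrightarrow> \<exists>g\<in>F. \<forall>x\<in>S. dist (f x) (g x) < 1"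
    using compactin_Cspace_finite_net[OF S K] by (metis zero_less_one)
  have "bounded (\<Union>g\<in>F. g ` S)"
  proof (intro bounded_UN ballI compact_imp_bounded compact_continuous_image[OF _ S])
    fix g assume "g \<in> F"
    then have "g \<in> mspace (Cspace S)" using F(2) compactin_subset_topspace[OF K] by auto
    then show "continuous_on S g" by (simp add: Cspace_def)
  qed (rule F(1))
  then obtain B where B: "\<And>g x. g \<in> F \<Longrightarrow> x \<in> S \<Longrightarrow> norm (g x) \<le> B" by (auto simp: bounded_iff)
  have "norm (f x) \<le> B + 1" if f: "f \<in> K" and x: "x \<in> S" for f x
  proof -
    obtain g where "g \<in> F" "dist (f x) (g x) < 1" using net[OF f] x by blast
    with B[of g x] x show ?thesis using norm_triangle_sub[of "f x" "g x"] by (simp add: dist_norm)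
  qed
  then show thesis by (rule that)
qed

lemma compactin_Cspace_uniformly_equicontinuous:
  fixes K :: "(real \<times> real \<Rightarrow> 'e::real_normed_vector) set"
  assumes S: "compact S" and K: "compactin (mtopology_of (Cspace S)) K"
  shows "uniformly_equicontinuous_on S K"
  unfolding uniformly_equicontinuous_on_def
proof (intro allI impI)
  fix e :: real assume "e > 0"
  then have e3: "e / 3 > 0" by simp
  obtain F where F: "finite F" "F \<subseteq> K"
    and net: "\<And>f. f \<in> K \<Longrightarrow> \<exists>g\<in>F. \<forall>x\<in>S. dist (f x) (g x) < e / 3"
    using compactin_Cspace_finite_net[OF S K e3] by blast
  have "uniformly_equicontinuous_on S F"
  proof (rule uniformly_equicontinuous_on_finite[OF F(1)])
    fix g assume "g \<in> F"
    then have "g \<in> mspace (Cspace S)" using F(2) compactin_subset_topspace[OF K] by auto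
    then have "continuous_on S g" by (simp add: Cspace_def)
    then show "uniformly_continuous_on S g" using S by (rule compact_uniformly_continuous)
  qed
  then obtain h where h: "h > 0"
    "\<And>g x y. g \<in> F \<Longrightarrow> x \<in> S \<Longrightarrow> y \<in> S \<Longrightarrow> dist x y \<le> h \<Longrightarrow> dist (g x) (g y) \<le> e / 3"
    using uniformly_equicontinuous_onD e3 by blast
  have "dist (f x) (f y) \<le> e" if "f \<in> K" "x \<in> S" "y \<in> S" "dist x y \<le> h" for f x y
  proof -
    obtain g where g: "g \<in> F" "\<forall>x\<in>S. dist (f x) (g x) < e / 3" using net[OF \<open>f \<in> K\<close>] by blast
    have "dist (f x) (f y) \<le> dist (f x) (g x) + dist (g x) (g y) + dist (g y) (f y)"
      using dist_triangle[of "f x" "f y" "g x"] dist_triangle[of "g x" "f y" "g y"] by linarith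
    also have "\<dots> \<le> e / 3 + e / 3 + e / 3"
      using g(2) h(2)[OF g(1) that(2-4)] that(2,3) by (intro add_mono) (auto simp: dist_commute less_imp_le)
    finally show ?thesis by simp
  qed
  with h(1) show "\<exists>h>0. \<forall>f\<in>K. \<forall>x\<in>S. \<forall>y\<in>S. dist x y \<le> h \<longrightarrow> dist (f x) (f y) \<le> e" by blast
qed

definition Cspace_bounded_modulus :: "(real \<times> real) set \<Rightarrow> real \<Rightarrow> (nat \<Rightarrow> real) \<Rightarrow> (real \<times> real \<Rightarrow> real) set" where
  "Cspace_bounded_modulus S B \<delta> = {f \<in> mspace (Cspace S). (\<forall>x\<in>S. \<bar>f x\<bar> \<le> B) \<and>
     (\<forall>k. \<forall>x\<in>S. \<forall>y\<in>S. dist x y < \<delta> k \<longrightarrow> \<bar>f x - f y\<bar> \<le> 1 / real (Suc k))}"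

lemma closedin_Cspace_bounded_modulus:
  assumes S: "compact S"
  shows "closedin (mtopology_of (Cspace S)) (Cspace_bounded_modulus S B \<delta>)"
proof -
  interpret C: Metric_space "mspace (Cspace S)" "mdist (Cspace S)" by simp
  define K where "K = Cspace_bounded_modulus S B \<delta>"
  have "closedin C.mtopology K"
    unfolding C.metric_closedin_iff_sequentially_closed
  proof (intro conjI allI impI)
    show "K \<subseteq> mspace (Cspace S)" by (auto simp: K_def Cspace_bounded_modulus_def)
    fix \<sigma> l assume a: "range \<sigma> \<subseteq> K \<and> limitin C.mtopology \<sigma> l sequentially"
    then have lM: "l \<in> mspace (Cspace S)"
      and ev: "\<And>\<epsilon>. \<epsilon> > 0 \<Longrightarrow> eventually (\<lambda>n. \<sigma> n \<in> mspace (Cspace S) \<and> mdist (Cspace S) (\<sigma> n) l < \<epsilon>) sequentially"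
      unfolding C.limitin_metric by blast+
    have \<sigma>K: "\<sigma> n \<in> K" for n using a by blast
    have lim: "(\<lambda>n. \<sigma> n x) \<longlonglongrightarrow> l x" if "x \<in> S" for x
    proof (rule tendstoI)
      fix \<epsilon> :: real assume "\<epsilon> > 0"
      show "eventually (\<lambda>n. dist (\<sigma> n x) (l x) < \<epsilon>) sequentially"
        using ev[OF \<open>\<epsilon> > 0\<close>]
      proof (rule eventually_mono)
        fix n assume "\<sigma> n \<in> mspace (Cspace S) \<and> mdist (Cspace S) (\<sigma> n) l < \<epsilon>"
        then show "dist (\<sigma> n x) (l x) < \<epsilon>" using Cspace_dist_lt[OF S _ lM _ that] by blast
      qed
    qed
    have "\<bar>l x\<bar> \<le> B" if "x \<in> S" for x
    proof (rule LIMSEQ_le_const2)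
      show "(\<lambda>n. \<bar>\<sigma> n x\<bar>) \<longlonglongrightarrow> \<bar>l x\<bar>" using lim[OF that] by (rule tendsto_rabs)
      show "\<exists>N. \<forall>n\<ge>N. \<bar>\<sigma> n x\<bar> \<le> B" using \<sigma>K that by (auto simp: K_def Cspace_bounded_modulus_def)
    qed
    moreover have "\<bar>l x - l y\<bar> \<le> 1 / real (Suc k)" if "x \<in> S" "y \<in> S" "dist x y < \<delta> k" for k x y
    proof (rule LIMSEQ_le_const2)
      show "(\<lambda>n. \<bar>\<sigma> n x - \<sigma> n y\<bar>) \<longlonglongrightarrow> \<bar>l x - l y\<bar>"
        using lim[OF that(1)] lim[OF that(2)] by (intro tendsto_rabs tendsto_diff)
      show "\<exists>N. \<forall>n\<ge>N. \<bar>\<sigma> n x - \<sigma> n y\<bar> \<le> 1 / real (Suc k)"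
        using \<sigma>K that by (auto simp: K_def Cspace_bounded_modulus_def)
    qed
    ultimately show "l \<in> K" using lM by (auto simp: K_def Cspace_bounded_modulus_def)
  qed
  then show ?thesis by (simp add: K_def mtopology_of_def)
qed

lemma (in Metric_space) mtotally_bounded_if_finite_code:
  assumes "K \<subseteq> M"
    and code: "\<And>\<epsilon>. \<epsilon> > 0 \<Longrightarrow> \<exists>code :: 'a \<Rightarrow> 'c. finite (code ` K) \<and> (\<forall>f\<in>K. \<forall>g\<in>K. code f = code g \<longrightarrow> d g f < \<epsilon>)"
  shows "mtotally_bounded K"
  unfolding mtotally_bounded_def
proof (intro allI impI)
  fix \<epsilon> :: real assume "\<epsilon> > 0"
  then obtain code :: "'a \<Rightarrow> 'c" where fin: "finite (code ` K)"
    and close: "\<And>f g. f \<in> K \<Longrightarrow> g \<in> K \<Longrightarrow> code f = code g \<Longrightarrow> d g f < \<epsilon>"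
    using code by blast
  define rep where "rep c = (SOME g. g \<in> K \<and> code g = c)" for c
  have rep: "rep (code f) \<in> K \<and> code (rep (code f)) = code f" if "f \<in> K" for f
    unfolding rep_def by (rule someI[of _ f]) (use that in simp)
  have "f \<in> mball (rep (code f)) \<epsilon>" if "f \<in> K" for f
  proof -
    have "d (rep (code f)) f < \<epsilon>" using close[of f "rep (code f)"] rep[OF that] that by simp
    then show ?thesis using rep[OF that] that \<open>K \<subseteq> M\<close> by (simp add: subset_iff)
  qed
  then have "K \<subseteq> (\<Union>g\<in>rep ` code ` K. mball g \<epsilon>)" by blast
  moreover have "rep ` code ` K \<subseteq> K" using rep by blast
  ultimately show "\<exists>N. finite N \<and> N \<subseteq> K \<and> K \<subseteq> (\<Union>g\<in>N. mball g \<epsilon>)"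
    using fin by blast
qed

text \<open>Two members of the set whose values on a finite \<open>\<delta> k\<close>-net round to the same multiples of
  \<open>\<gamma>\<close> are uniformly \<open>3 \<gamma>\<close>-close.\<close>

lemma mtotally_bounded_Cspace_bounded_modulus:
  assumes S: "compact S" and \<delta>: "\<And>k. \<delta> k > 0"
  shows "Metric_space.mtotally_bounded (mspace (Cspace S)) (mdist (Cspace S)) (Cspace_bounded_modulus S B \<delta>)"
proof (rule Metric_space.mtotally_bounded_if_finite_code)
  let ?K = "Cspace_bounded_modulus S B \<delta>"
  show "?K \<subseteq> mspace (Cspace S)" by (auto simp: Cspace_bounded_modulus_def)
  fix \<epsilon> :: real assume "\<epsilon> > 0"
  define \<gamma> where "\<gamma> = \<epsilon> / 4"
  have \<gamma>: "\<gamma> > 0" using \<open>\<epsilon> > 0\<close> by (simp add: \<gamma>_def)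
  obtain k where k: "inverse (real (Suc k)) < \<gamma>" using reals_Archimedean[OF \<gamma>] by blast
  obtain F where F: "F \<subseteq> S" "finite F" "S \<subseteq> (\<Union>c\<in>F. ball c (\<delta> k))"
  proof (rule compactE_image[OF S, of S "\<lambda>c. ball c (\<delta> k)"])
    show "S \<subseteq> (\<Union>c\<in>S. ball c (\<delta> k))" using \<delta>[of k] by force
  qed auto
  define code where "code f = restrict (\<lambda>j. round (f j / \<gamma>)) F" for f :: "real \<times> real \<Rightarrow> real"
  define m where "m = \<lceil>B / \<gamma>\<rceil> + 1"
  have "code f \<in> Pi\<^sub>E F (\<lambda>_. {-m..m})" if "f \<in> ?K" for f
  proof -
    have "round (f j / \<gamma>) \<in> {-m..m}" if "j \<in> F" for j
    proof -
      have "\<bar>f j\<bar> \<le> B" using \<open>f \<in> ?K\<close> that F(1) by (auto simp: Cspace_bounded_modulus_def)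
      then have "\<bar>f j / \<gamma>\<bar> \<le> B / \<gamma>" using \<gamma> by (simp add: abs_divide divide_right_mono)
      then have "\<bar>real_of_int (round (f j / \<gamma>))\<bar> \<le> real_of_int m"
        using of_int_round_abs_le[of "f j / \<gamma>"] le_of_int_ceiling[of "B / \<gamma>"] unfolding m_def by linarith
      then show ?thesis by auto
    qed
    then show ?thesis by (auto simp: code_def)
  qed
  then have "finite (code ` ?K)"
    by (intro finite_subset[OF _ finite_PiE[OF F(2), of "\<lambda>_. {-m..m}"]]) auto
  moreover have "mdist (Cspace S) g f < \<epsilon>" if f: "f \<in> ?K" and g: "g \<in> ?K" and "code f = code g" for f g
  proof -
    have "dist (g x) (f x) \<le> 3 * \<gamma>" if x: "x \<in> S" for x
    proof -
      obtain j where j: "j \<in> F" "dist x j < \<delta> k" using F(3) x by (force simp: dist_commute)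
      have "round (f j / \<gamma>) = round (g j / \<gamma>)"
        using fun_cong[OF \<open>code f = code g\<close>, of j] j(1) by (simp add: code_def)
      then have "\<bar>f j / \<gamma> - g j / \<gamma>\<bar> \<le> 1"
        using of_int_round_abs_le[of "f j / \<gamma>"] of_int_round_abs_le[of "g j / \<gamma>"] by linarith
      then have "\<bar>f j - g j\<bar> \<le> \<gamma>" using \<gamma> by (simp add: diff_divide_distrib[symmetric] abs_divide)
      moreover have "\<bar>f x - f j\<bar> \<le> \<gamma>" "\<bar>g x - g j\<bar> \<le> \<gamma>"
        using f g x j F(1) k by (fastforce simp: Cspace_bounded_modulus_def inverse_eq_divide)+
      ultimately show ?thesis by (simp add: dist_real_def)
    qed
    then have "mdist (Cspace S) g f \<le> 3 * \<gamma>"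
      unfolding Cspace_def by (intro mdist_cfunspace_le) (use \<gamma> in auto)
    then show ?thesis using \<gamma> by (simp add: \<gamma>_def)
  qed
  ultimately show "\<exists>code :: (real \<times> real \<Rightarrow> real) \<Rightarrow> (real \<times> real \<Rightarrow> int).
      finite (code ` ?K) \<and> (\<forall>f\<in>?K. \<forall>g\<in>?K. code f = code g \<longrightarrow> mdist (Cspace S) g f < \<epsilon>)"
    by blast
qed simp

lemma compactin_Cspace_bounded_modulus:
  assumes "compact S" "\<And>k. \<delta> k > 0"
  shows "compactin (mtopology_of (Cspace S)) (Cspace_bounded_modulus S B \<delta>)"
proof -
  interpret C: Metric_space "mspace (Cspace S)" "mdist (Cspace S)" by simp
  have "compactin C.mtopology (C.mtopology closure_of Cspace_bounded_modulus S B \<delta>)"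
    using C.mtotally_bounded_eq_compact_closure_of[OF Cspace_mcomplete]
      mtotally_bounded_Cspace_bounded_modulus[OF assms, of B] by (simp add: Cspace_bounded_modulus_def)
  then show ?thesis
    using closedin_Cspace_bounded_modulus[OF assms(1)] by (simp add: closure_of_closedin mtopology_of_def)
qed

section \<open>Measurability\<close>

lemma le_on_closure_of_dense:
  fixes g :: "'b::topological_space \<Rightarrow> real"
  assumes "continuous_on X g" "D \<subseteq> X" "X \<subseteq> closure D" "\<And>x. x \<in> D \<Longrightarrow> g x \<le> c" "x \<in> X"
  shows "g x \<le> c"
proof -
  have "closedin (top_of_set X) (X \<inter> g -` {..c})"
    using assms(1) closed_atMost by (rule continuous_closedin_preimage)
  then obtain C where C: "closed C" "X \<inter> g -` {..c} = X \<inter> C" by (auto simp: closedin_closed)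
  have "D \<subseteq> C" using assms(2,4) C(2) by auto
  then have "closure D \<subseteq> C" using C(1) by (rule closure_minimal)
  then show ?thesis using assms(3,5) C(2) by blast
qed

lemma sets_Collect_ball_le_continuous:
  fixes g :: "'a \<Rightarrow> 'b::{metric_space, second_countable_topology} \<Rightarrow> real"
  assumes cont: "\<And>\<omega>. \<omega> \<in> space M \<Longrightarrow> continuous_on X (g \<omega>)"
    and meas: "\<And>x. x \<in> X \<Longrightarrow> (\<lambda>\<omega>. g \<omega> x) \<in> borel_measurable M"
  shows "{\<omega> \<in> space M. \<forall>x\<in>X. g \<omega> x \<le> c} \<in> sets M"
proof -
  obtain D where D: "countable D" "D \<subseteq> X" "X \<subseteq> closure D" by (rule separable)
  have "{\<omega> \<in> space M. \<forall>x\<in>X. g \<omega> x \<le> c} = {\<omega> \<in> space M. \<forall>x\<in>D. g \<omega> x \<le> c}"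
    using le_on_closure_of_dense[OF cont D(2,3)] D(2) by blast
  also have "\<dots> \<in> sets M"
  proof (rule sets.sets_Collect_countable_All'[OF _ D(1)])
    fix x assume "x \<in> D"
    then have "x \<in> X" using D(2) by blast
    then show "{\<omega> \<in> space M. g \<omega> x \<le> c} \<in> sets M" using meas by measurable
  qed
  finally show ?thesis .
qed

text \<open>Partitions with rational interior points; indices beyond the list give the endpoint \<open>t\<close>.
  By continuity of \<open>G\<close> their sums are dense among all partition sums, which turns
  \<open>pvar_sup\<close> into a countable supremum.\<close>

definition rat_partition :: "real \<Rightarrow> real \<Rightarrow> rat list \<Rightarrow> nat \<Rightarrow> real" where
  "rat_partition s t qs i = (if i = 0 then s else if i \<le> length qs then real_of_rat (qs ! (i - 1)) else t)"

lemma rat_partition_near: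
  assumes u: "is_partition u (Suc n) s t" and "\<rho> > 0"
  obtains qs where "length qs = n" "\<And>i. i \<le> Suc n \<Longrightarrow> \<bar>rat_partition s t qs i - u i\<bar> < \<rho>"
proof -
  have "\<exists>r::rat. \<bar>real_of_rat r - u i\<bar> < \<rho>" for i
  proof -
    obtain r where "r \<in> \<rat>" "u i - \<rho> < r" "r < u i + \<rho>"
      using Rats_dense_in_real[of "u i - \<rho>" "u i + \<rho>"] \<open>\<rho> > 0\<close> by auto
    moreover from \<open>r \<in> \<rat>\<close> obtain r' where "r = real_of_rat r'" by (auto elim: Rats_cases)
    ultimately show ?thesis by (intro exI[of _ r']) auto
  qed
  then obtain r where r: "\<And>i. \<bar>real_of_rat (r i) - u i\<bar> < \<rho>" by metis
  define qs where "qs = map (\<lambda>i. r (Suc i)) [0..<n]"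
  have "\<bar>rat_partition s t qs i - u i\<bar> < \<rho>" if "i \<le> Suc n" for i
    using that r[of i] u \<open>\<rho> > 0\<close>
    by (auto simp: rat_partition_def qs_def is_partition_def not_le le_Suc_eq)
  then show thesis by (intro that[of qs]) (auto simp: qs_def)
qed

lemma partition_sum_approx_rat_partition:
  fixes G :: "real \<times> real \<Rightarrow> 'e::real_normed_vector"
  assumes u: "is_partition u N s t" and "0 \<le> s" "s < t" "t \<le> T"
    and cont: "continuous_on (simplex2 T) G" and "q > 0" "e > 0"
  obtains qs where "is_partition (rat_partition s t qs) (Suc (length qs)) s t"
    "partition_sum q G u N \<le> partition_sum q G (rat_partition s t qs) (Suc (length qs)) + e"
proof -
  obtain n where N: "N = Suc n" using u assms by (cases N) (auto simp: is_partition_def)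
  have "uniformly_continuous_on (simplex2 T) (\<lambda>x. norm (G x) powr q)"
    using \<open>q > 0\<close> by (intro compact_uniformly_continuous compact_simplex2 continuous_on_powr' continuous_intros cont) auto
  moreover have "e / N > 0" using \<open>e > 0\<close> N by simp
  ultimately obtain \<eta> where \<eta>: "\<eta> > 0" "\<And>x x'. x \<in> simplex2 T \<Longrightarrow> x' \<in> simplex2 T \<Longrightarrow> dist x' x < \<eta> \<Longrightarrow>
      \<bar>norm (G x') powr q - norm (G x) powr q\<bar> < e / N"
    unfolding uniformly_continuous_on_def dist_real_def by blast
  define g where "g = Min ((\<lambda>i. u (Suc i) - u i) ` {..<N})"
  have "g > 0" unfolding g_def using u N by (subst Min_gr_iff) (auto simp: is_partition_def)
  have gap: "g \<le> u (Suc i) - u i" if "i < N" for i unfolding g_def using that by (intro Min_le) auto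
  define \<rho> where "\<rho> = min (\<eta> / 2) (g / 2)"
  have "\<rho> > 0" using \<eta>(1) \<open>g > 0\<close> by (simp add: \<rho>_def)
  then obtain qs where qs: "length qs = n" "\<And>i. i \<le> N \<Longrightarrow> \<bar>rat_partition s t qs i - u i\<bar> < \<rho>"
    using rat_partition_near[OF u[unfolded N]] N by blast
  define w where "w = rat_partition s t qs"
  have near: "\<bar>w i - u i\<bar> < \<rho>" if "i \<le> N" for i using qs(2) that by (simp add: w_def)
  have w: "is_partition w N s t"
    unfolding is_partition_def
  proof (intro conjI allI impI)
    show "w 0 = s" "w N = t" using qs(1) N by (simp_all add: w_def rat_partition_def)
    fix i assume "i < N"
    with near[of i] near[of "Suc i"] gap[of i] show "w i < w (Suc i)" unfolding \<rho>_def by arith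
  qed
  have "partition_sum q G u N - partition_sum q G w N \<le> (\<Sum>i<N. e / N)"
    unfolding partition_sum_def sum_subtractf[symmetric]
  proof (rule sum_mono)
    fix i assume "i \<in> {..<N}"
    then have i: "i < N" by simp
    have "dist (w i, w (Suc i)) (u i, u (Suc i)) \<le> \<bar>w i - u i\<bar> + \<bar>w (Suc i) - u (Suc i)\<bar>"
      using dist_triangle[of "(w i, w (Suc i))" "(u i, u (Suc i))" "(u i, w (Suc i))"]
      by (simp add: dist_Pair_Pair dist_real_def)
    also have "\<dots> < \<eta>" using near[of i] near[of "Suc i"] i unfolding \<rho>_def by arith
    moreover have "(u i, u (Suc i)) \<in> simplex2 T" "(w i, w (Suc i)) \<in> simplex2 T"
      using is_partition_interval[OF u i] is_partition_interval[OF w i] assms by (auto simp: simplex2_def)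
    ultimately have "\<bar>norm (G (w i, w (Suc i))) powr q - norm (G (u i, u (Suc i))) powr q\<bar> < e / N"
      by (intro \<eta>(2)) auto
    then show "norm (G (u i, u (Suc i))) powr q - norm (G (w i, w (Suc i))) powr q \<le> e / N"
      by linarith
  qed
  also have "\<dots> = e" using N by simp
  finally show thesis using w qs(1) N by (intro that) (auto simp: w_def)
qed

lemma pvar_sup_eq_SUP_rat_partitions:
  fixes G :: "real \<times> real \<Rightarrow> 'e::real_normed_vector"
  assumes "0 \<le> s" "s < t" "t \<le> T" and cont: "continuous_on (simplex2 T) G" and "q > 0"
    and bdd: "bdd_above (pvar_sums q G s t)"
  defines "J \<equiv> {qs. is_partition (rat_partition s t qs) (Suc (length qs)) s t}"
  shows "pvar_sup q G s t = (SUP qs\<in>J. partition_sum q G (rat_partition s t qs) (Suc (length qs)))"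
proof -
  let ?F = "\<lambda>qs. partition_sum q G (rat_partition s t qs) (Suc (length qs))"
  have F_in: "?F qs \<in> pvar_sums q G s t" if "qs \<in> J" for qs
    using that unfolding J_def pvar_sums_eq by blast
  have "[] \<in> J" using assms by (simp add: J_def is_partition_def rat_partition_def)
  have bddJ: "bdd_above (?F ` J)" using bdd F_in by (meson bdd_above_mono image_subsetI)
  show ?thesis
    unfolding pvar_sup_def
  proof (rule antisym)
    show "Sup (pvar_sums q G s t) \<le> (SUP qs\<in>J. ?F qs)"
    proof (rule cSup_least)
      show "pvar_sums q G s t \<noteq> {}" using F_in[OF \<open>[] \<in> J\<close>] by blast
      fix x assume "x \<in> pvar_sums q G s t"
      then obtain u N where u: "is_partition u N s t" and x: "x = partition_sum q G u N"
        by (auto simp: pvar_sums_eq)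
      show "x \<le> (SUP qs\<in>J. ?F qs)"
      proof (rule field_le_epsilon)
        fix e :: real assume "e > 0"
        obtain qs where qs: "is_partition (rat_partition s t qs) (Suc (length qs)) s t"
          "partition_sum q G u N \<le> ?F qs + e"
          by (rule partition_sum_approx_rat_partition[OF u assms(1-3) cont \<open>q > 0\<close> \<open>e > 0\<close>])
        then have "qs \<in> J" by (simp add: J_def)
        then have "?F qs \<le> (SUP qs\<in>J. ?F qs)" using bddJ by (rule cSUP_upper)
        then show "x \<le> (SUP qs\<in>J. ?F qs) + e" using qs(2) x by simp
      qed
    qed
    show "(SUP qs\<in>J. ?F qs) \<le> Sup (pvar_sums q G s t)"
      using \<open>[] \<in> J\<close> F_in bdd by (intro cSUP_least cSup_upper) auto
  qed
qed

lemma pvar_norm_measurable: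
  fixes Z :: "'a \<Rightarrow> real \<times> real \<Rightarrow> 'e::{real_normed_vector, second_countable_topology}"
  assumes meas: "\<And>x. x \<in> simplex2 T \<Longrightarrow> (\<lambda>\<omega>. Z \<omega> x) \<in> borel_measurable M"
    and cont: "\<And>\<omega>. \<omega> \<in> space M \<Longrightarrow> continuous_on (simplex2 T) (Z \<omega>)"
    and bdd: "\<And>\<omega>. \<omega> \<in> space M \<Longrightarrow> bdd_above (pvar_sums q (Z \<omega>) s t)"
    and st: "(s, t) \<in> simplex2 T" and "q > 0"
  shows "(\<lambda>\<omega>. pvar_norm q (Z \<omega>) s t) \<in> borel_measurable M"
proof -
  have "(\<lambda>\<omega>. pvar_sup q (Z \<omega>) s t) \<in> borel_measurable M"
  proof (cases "s = t")
    case True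
    then show ?thesis by (simp add: pvar_sup_def pvar_sums_same_endpoints)
  next
    case False
    with st have st': "0 \<le> s" "s < t" "t \<le> T" by (auto simp: simplex2_def)
    define J where "J = {qs. is_partition (rat_partition s t qs) (Suc (length qs)) s t}"
    define F where "F = (\<lambda>qs \<omega>. partition_sum q (Z \<omega>) (rat_partition s t qs) (Suc (length qs)))"
    have F_meas: "F qs \<in> borel_measurable M" if "qs \<in> J" for qs
      unfolding F_def partition_sum_def
    proof (rule borel_measurable_sum)
      fix i assume "i \<in> {..<Suc (length qs)}"
      with that st' have "(rat_partition s t qs i, rat_partition s t qs (Suc i)) \<in> simplex2 T"
        using is_partition_interval[of "rat_partition s t qs" "Suc (length qs)" s t i]
        by (auto simp: J_def simplex2_def)
      from meas[OF this] show "(\<lambda>\<omega>. norm (Z \<omega> (rat_partition s t qs i, rat_partition s t qs (Suc i))) powr q)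
          \<in> borel_measurable M" by measurable
    qed
    have "(\<lambda>\<omega>. SUP qs\<in>J. F qs \<omega>) \<in> borel_measurable M"
    proof (rule borel_measurable_cSUP[OF _ F_meas])
      show "countable J" by (rule countable_subset[OF subset_UNIV]) simp
      fix \<omega> assume "\<omega> \<in> space M"
      have "(\<lambda>qs. F qs \<omega>) ` J \<subseteq> pvar_sums q (Z \<omega>) s t"
        unfolding F_def J_def pvar_sums_eq by blast
      with bdd[OF \<open>\<omega> \<in> space M\<close>] show "bdd_above ((\<lambda>qs. F qs \<omega>) ` J)"
        by (rule bdd_above_mono)
    qed
    then show ?thesis
      by (rule measurable_cong[THEN iffD1, rotated])
        (use pvar_sup_eq_SUP_rat_partitions[OF st' cont _ bdd] \<open>q > 0\<close> in \<open>simp add: F_def J_def\<close>)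
  qed
  then show ?thesis unfolding pvar_norm_eq by (rule powr_real_measurable) simp
qed

section \<open>Families of paths with bounded p-variation\<close>

lemma exists_pos_powr_mult_le:
  fixes r W e :: real
  assumes "0 < r" "0 \<le> W" "0 < e"
  obtains c where "c > 0" "c powr r * W \<le> e"
proof
  define c where "c = (e / (W + 1)) powr (1 / r)"
  show "c > 0" using assms by (simp add: c_def)
  have "c powr r * W = e * (W / (W + 1))"
    using assms by (simp add: c_def powr_powr field_simps)
  also have "\<dots> \<le> e" using assms by (intro mult_left_le) simp_all
  finally show "c powr r * W \<le> e" .
qed

definition pvar_family ::
    "real \<Rightarrow> real \<Rightarrow> (real \<times> real \<Rightarrow> 'e) set \<Rightarrow> real \<Rightarrow> (real \<times> real \<Rightarrow> 'e::real_normed_vector) set" where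
  "pvar_family T p K W = {G. restrict G (simplex2 T) \<in> K \<and> (\<forall>t. 0 \<le> t \<longrightarrow> t \<le> T \<longrightarrow> G (t, t) = 0) \<and>
     (\<forall>x\<in>pvar_sums p G 0 T. x \<le> W)}"

context
  fixes T p p' W :: real and K :: "(real \<times> real \<Rightarrow> 'e::real_normed_vector) set"
  assumes K: "compactin (mtopology_of (Cspace (simplex2 T))) K"
    and exponents: "0 < p" "p < p'"
begin

lemma pvar_family_bounded:
  obtains B where "0 \<le> B" "\<And>G x. G \<in> pvar_family T p K W \<Longrightarrow> x \<in> simplex2 T \<Longrightarrow> norm (G x) \<le> B"
proof -
  obtain B where B: "\<And>f x. f \<in> K \<Longrightarrow> x \<in> simplex2 T \<Longrightarrow> norm (f x) \<le> B"
    using compactin_Cspace_bounded[OF compact_simplex2 K] by blast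
  have "norm (G x) \<le> max B 0" if "G \<in> pvar_family T p K W" "x \<in> simplex2 T" for G x
    using B[of "restrict G (simplex2 T)" x] that by (simp add: pvar_family_def)
  then show thesis by (intro that[of "max B 0"]) auto
qed

lemma pvar_family_uniformly_equicontinuous:
  "uniformly_equicontinuous_on (simplex2 T) (pvar_family T p K W)"
  unfolding uniformly_equicontinuous_on_def
proof (intro allI impI)
  fix e :: real assume "e > 0"
  then obtain h where h: "h > 0" "\<And>f x y. f \<in> K \<Longrightarrow> x \<in> simplex2 T \<Longrightarrow> y \<in> simplex2 T \<Longrightarrow>
      dist x y \<le> h \<Longrightarrow> dist (f x) (f y) \<le> e"
    using uniformly_equicontinuous_onD[OF compactin_Cspace_uniformly_equicontinuous[OF compact_simplex2 K]]
    by blast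
  have "dist (G x) (G y) \<le> e"
    if "G \<in> pvar_family T p K W" "x \<in> simplex2 T" "y \<in> simplex2 T" "dist x y \<le> h" for G x y
    using h(2)[of "restrict G (simplex2 T)" x y] that by (simp add: pvar_family_def)
  with h(1) show "\<exists>h>0. \<forall>f\<in>pvar_family T p K W. \<forall>x\<in>simplex2 T. \<forall>y\<in>simplex2 T.
      dist x y \<le> h \<longrightarrow> dist (f x) (f y) \<le> e" by blast
qed

lemma pvar_family_short_increments:
  assumes "c > 0"
  obtains h where "h > 0" "\<And>G a b. G \<in> pvar_family T p K W \<Longrightarrow> 0 \<le> a \<Longrightarrow> a \<le> b \<Longrightarrow> b \<le> T \<Longrightarrow> b - a \<le> h \<Longrightarrow>
      norm (G (a, b)) \<le> c"
proof -
  obtain h where h: "h > 0" "\<And>G x y. G \<in> pvar_family T p K W \<Longrightarrow> x \<in> simplex2 T \<Longrightarrow> y \<in> simplex2 T \<Longrightarrow>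
      dist x y \<le> h \<Longrightarrow> dist (G x) (G y) \<le> c"
    using uniformly_equicontinuous_onD[OF pvar_family_uniformly_equicontinuous \<open>c > 0\<close>] by blast
  have "norm (G (a, b)) \<le> c"
    if "G \<in> pvar_family T p K W" "0 \<le> a" "a \<le> b" "b \<le> T" "b - a \<le> h" for G a b
  proof -
    have "dist (G (a, b)) (G (b, b)) \<le> c"
      using that by (intro h(2)) (auto simp: simplex2_def dist_Pair_Pair dist_real_def)
    moreover have "G (b, b) = 0" using that by (auto simp: pvar_family_def)
    ultimately show ?thesis by simp
  qed
  with h(1) show thesis by (rule that)
qed

lemma pvar_family_norm_powr_equicontinuous:
  "uniformly_equicontinuous_on (simplex2 T) ((\<lambda>G x. norm (G x) powr p') ` pvar_family T p K W)"
proof -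
  obtain B where B: "\<And>G x. G \<in> pvar_family T p K W \<Longrightarrow> x \<in> simplex2 T \<Longrightarrow> norm (G x) \<le> B"
    using pvar_family_bounded by blast
  have "uniformly_equicontinuous_on (simplex2 T) ((\<lambda>G. norm \<circ> G) ` pvar_family T p K W)"
    by (rule uniformly_equicontinuous_on_compose[OF pvar_family_uniformly_equicontinuous])
      (auto intro: uniformly_continuous_on_norm uniformly_continuous_on_id)
  then have "uniformly_equicontinuous_on (simplex2 T)
      ((\<lambda>f. (\<lambda>v. v powr p') \<circ> f) ` (\<lambda>G. norm \<circ> G) ` pvar_family T p K W)"
  proof (rule uniformly_equicontinuous_on_compose[where A = "{0..B}"])
    show "uniformly_continuous_on {0..B} (\<lambda>v. v powr p')"
      using exponents by (intro compact_uniformly_continuous continuous_on_powr' continuous_intros) auto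
  qed (use B in auto)
  then show ?thesis by (simp add: image_image comp_def)
qed

lemma pvar_estimates_of_pvar_family:
  assumes "G \<in> pvar_family T p K W" "\<And>x. x \<in> simplex2 T \<Longrightarrow> norm (G x) \<le> B"
  shows "pvar_estimates G T p p' B W"
  using assms exponents by unfold_locales (auto simp: pvar_family_def)

lemma pvar_family_pvar_sup_equicontinuous:
  assumes "0 \<le> W"
  shows "uniformly_equicontinuous_on (simplex2 T) ((\<lambda>G x. pvar_sup p' G (fst x) (snd x)) ` pvar_family T p K W)"
  unfolding uniformly_equicontinuous_on_def
proof (intro allI impI)
  fix e :: real assume "e > 0"
  obtain B where B: "\<And>G x. G \<in> pvar_family T p K W \<Longrightarrow> x \<in> simplex2 T \<Longrightarrow> norm (G x) \<le> B"
    using pvar_family_bounded by blast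
  have "e / 4 > 0" using \<open>e > 0\<close> by simp
  then obtain c where "c > 0" and cW: "c powr (p' - p) * W \<le> e / 4"
    using exists_pos_powr_mult_le[of "p' - p" W "e / 4"] exponents \<open>0 \<le> W\<close> by auto
  obtain h1 where h1: "h1 > 0" "\<And>G a b. G \<in> pvar_family T p K W \<Longrightarrow> 0 \<le> a \<Longrightarrow> a \<le> b \<Longrightarrow> b \<le> T \<Longrightarrow>
      b - a \<le> h1 \<Longrightarrow> norm (G (a, b)) \<le> c"
    using pvar_family_short_increments[OF \<open>c > 0\<close>] by blast
  from \<open>e / 4 > 0\<close> obtain h2 where h2: "h2 > 0" "\<And>f x y. f \<in> (\<lambda>G x. norm (G x) powr p') ` pvar_family T p K W \<Longrightarrow>
      x \<in> simplex2 T \<Longrightarrow> y \<in> simplex2 T \<Longrightarrow> dist x y \<le> h2 \<Longrightarrow> dist (f x) (f y) \<le> e / 4"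
    using uniformly_equicontinuous_onD[OF pvar_family_norm_powr_equicontinuous] by blast
  have "dist (pvar_sup p' G (fst x) (snd x)) (pvar_sup p' G (fst y) (snd y)) \<le> e"
    if G: "G \<in> pvar_family T p K W" and xy: "x \<in> simplex2 T" "y \<in> simplex2 T" "dist x y \<le> min h1 h2"
    for G x y
  proof -
    interpret pvar_estimates G T p p' B W
      using pvar_estimates_of_pvar_family[OF G] B[OF G] by blast
    have "\<bar>pvar_sup p' G (fst x) (snd x) - pvar_sup p' G (fst y) (snd y)\<bar> \<le> 2 * (c powr (p' - p) * W + e / 4)"
    proof (rule pvar_sup_dist[of "min h1 h2" c "e / 4"])
      show "norm (G (a, b)) \<le> c" if "0 \<le> a" "a \<le> b" "b \<le> T" "b - a \<le> min h1 h2" for a b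
        using h1(2)[OF G] that by simp
      show "\<bar>norm (G u) powr p' - norm (G v) powr p'\<bar> \<le> e / 4"
        if "u \<in> simplex2 T" "v \<in> simplex2 T" "dist u v \<le> min h1 h2" for u v
        using h2(2)[OF imageI[OF G]] that by (simp add: dist_real_def)
    qed (use \<open>c > 0\<close> \<open>e > 0\<close> xy in simp_all)
    also have "\<dots> \<le> e" using cW by simp
    finally show ?thesis by (simp add: dist_real_def)
  qed
  with h1(1) h2(1) show "\<exists>h>0. \<forall>f\<in>(\<lambda>G x. pvar_sup p' G (fst x) (snd x)) ` pvar_family T p K W.
      \<forall>x\<in>simplex2 T. \<forall>y\<in>simplex2 T. dist x y \<le> h \<longrightarrow> dist (f x) (f y) \<le> e"
    by (intro exI[of _ "min h1 h2"] conjI ballI impI) auto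
qed

lemma pvar_family_pvar_norm:
  assumes "0 \<le> W"
  obtains V where "\<And>G x. G \<in> pvar_family T p K W \<Longrightarrow> x \<in> simplex2 T \<Longrightarrow> \<bar>case_prod (pvar_norm p' G) x\<bar> \<le> V"
    and "uniformly_equicontinuous_on (simplex2 T) ((\<lambda>G. case_prod (pvar_norm p' G)) ` pvar_family T p K W)"
proof -
  obtain B where B: "\<And>G x. G \<in> pvar_family T p K W \<Longrightarrow> x \<in> simplex2 T \<Longrightarrow> norm (G x) \<le> B"
    using pvar_family_bounded by blast
  define V where "V = B powr (p' - p) * W"
  have range: "pvar_sup p' G s t \<in> {0..V}" if "G \<in> pvar_family T p K W" "(s, t) \<in> simplex2 T" for G s t
  proof -
    interpret pvar_estimates G T p p' B W
      using pvar_estimates_of_pvar_family[OF that(1)] B[OF that(1)] by blast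
    show ?thesis using that(2) pvar_sup_nonneg pvar_sup_le_bound by (auto simp: V_def simplex2_def)
  qed
  have bound: "\<bar>case_prod (pvar_norm p' G) x\<bar> \<le> V powr (1 / p')"
    if "G \<in> pvar_family T p K W" "x \<in> simplex2 T" for G x
    using range[OF that(1), of "fst x" "snd x"] that(2) exponents
    by (auto simp: pvar_norm_eq case_prod_beta intro: powr_mono2)
  have "uniformly_equicontinuous_on (simplex2 T)
      ((\<lambda>f. (\<lambda>v. v powr (1 / p')) \<circ> f) ` (\<lambda>G x. pvar_sup p' G (fst x) (snd x)) ` pvar_family T p K W)"
  proof (rule uniformly_equicontinuous_on_compose[where A = "{0..V}"])
    show "uniformly_continuous_on {0..V} (\<lambda>v. v powr (1 / p'))"
      using exponents by (intro compact_uniformly_continuous continuous_on_powr' continuous_intros) auto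
  qed (use pvar_family_pvar_sup_equicontinuous[OF assms] range in auto)
  then have "uniformly_equicontinuous_on (simplex2 T)
      ((\<lambda>G x. pvar_sup p' G (fst x) (snd x) powr (1 / p')) ` pvar_family T p K W)"
    by (simp add: image_image comp_def)
  also have "(\<lambda>G x. pvar_sup p' G (fst x) (snd x) powr (1 / p')) ` pvar_family T p K W
      = (\<lambda>G. case_prod (pvar_norm p' G)) ` pvar_family T p K W"
    by (intro image_cong refl) (auto simp: fun_eq_iff pvar_norm_eq)
  finally show thesis using bound by (rule that[rotated])
qed

end

lemma pvar_estimates_of_finite_pvar:
  assumes "0 < p" "p \<le> p'" "continuous_on (simplex2 T) G" "finite_pvar p G 0 T"
  obtains B W where "0 \<le> W" "pvar_estimates G T p p' B W"
proof -
  obtain B where B: "\<And>x. x \<in> simplex2 T \<Longrightarrow> norm (G x) \<le> B"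
    using compact_imp_bounded[OF compact_continuous_image[OF assms(3) compact_simplex2]]
    by (auto simp: bounded_iff)
  define W where "W = max (Sup (pvar_sums p G 0 T)) 0"
  have "x \<le> W" if "x \<in> pvar_sums p G 0 T" for x
    using assms(4) that cSup_upper[of x "pvar_sums p G 0 T"] by (auto simp: finite_pvar_def W_def)
  with B assms(1,2) have "pvar_estimates G T p p' B W" by unfold_locales auto
  then show thesis by (intro that[of W]) (auto simp: W_def)
qed

lemma continuous_on_pvar_norm:
  assumes p: "0 < p" "p < p'" and cont: "continuous_on (simplex2 T) G"
    and diag: "\<And>t. 0 \<le> t \<Longrightarrow> t \<le> T \<Longrightarrow> G (t, t) = 0" and fin: "finite_pvar p G 0 T"
  shows "continuous_on (simplex2 T) (case_prod (pvar_norm p' G))"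
proof -
  obtain B W where "0 \<le> W" "pvar_estimates G T p p' B W"
    using pvar_estimates_of_finite_pvar[OF p(1) less_imp_le[OF p(2)] cont fin] by blast
  define K where "K = {restrict G (simplex2 T)}"
  have K: "compactin (mtopology_of (Cspace (simplex2 T))) K"
    using restrict_in_Cspace[OF compact_simplex2 cont] by (simp add: K_def)
  have "G \<in> pvar_family T p K W"
    using diag pvar_estimates.pvar_sums_le_bound[OF \<open>pvar_estimates G T p p' B W\<close>]
    by (simp add: pvar_family_def K_def)
  moreover obtain V where
    "uniformly_equicontinuous_on (simplex2 T) ((\<lambda>G. case_prod (pvar_norm p' G)) ` pvar_family T p K W)"
    using pvar_family_pvar_norm[OF K p \<open>0 \<le> W\<close>] by blast
  ultimately show ?thesis by (blast intro: uniformly_equicontinuous_on_imp_continuous_on)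
qed

lemma bdd_above_pvar_sums_of_finite_pvar:
  assumes "0 < p" "p \<le> p'" "continuous_on (simplex2 T) G" "finite_pvar p G 0 T" "(s, t) \<in> simplex2 T"
  shows "bdd_above (pvar_sums p' G s t)"
proof -
  obtain B W where "pvar_estimates G T p p' B W"
    using pvar_estimates_of_finite_pvar[OF assms(1-4)] by blast
  then show ?thesis using assms(5) by (simp add: pvar_estimates.bdd_above_pvar_sums simplex2_def)
qed

lemma pvar_sums_le_of_pvar_norm_le:
  assumes "0 < p" "finite_pvar p G s t" "pvar_norm p G s t \<le> R" "x \<in> pvar_sums p G s t"
  shows "x \<le> R powr p"
proof -
  have "0 \<le> x" using assms(4) by (auto simp: pvar_sums_eq partition_sum_nonneg)
  have "x \<le> Sup (pvar_sums p G s t)"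
    using assms(2,4) by (intro cSup_upper) (auto simp: finite_pvar_def)
  also have "\<dots> = pvar_norm p G s t powr p"
    using \<open>0 \<le> x\<close> calculation assms(1) by (simp add: pvar_norm_def powr_powr)
  also have "\<dots> \<le> R powr p"
    using assms(1,3) by (intro powr_mono2) (auto simp: pvar_norm_def)
  finally show ?thesis .
qed

section \<open>Tightness\<close>

lemma (in prob_space) prob_Int_ge:
  assumes "1 - a \<le> prob A" "1 - b \<le> prob B" "a < 1" "b < 1"
  shows "A \<inter> B \<in> events" "1 - a - b \<le> prob (A \<inter> B)"
proof -
  \<comment> \<open>a set of positive measure is measurable, as \<open>measure\<close> is \<open>0\<close> outside \<open>sets M\<close>\<close>
  have "A \<in> events" "B \<in> events"
    using assms measure_notin_sets[of A M] measure_notin_sets[of B M] by force+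
  then show "A \<inter> B \<in> events" by blast
  have "prob (A \<union> B) = prob A + prob B - prob (A \<inter> B)"
    using \<open>A \<in> events\<close> \<open>B \<in> events\<close> by (intro measure_Un3) (simp_all add: fmeasurable_eq_sets)
  with prob_le_1[of "A \<union> B"] assms(1,2) show "1 - a - b \<le> prob (A \<inter> B)" by linarith
qed

text \<open>``whp'': with high probability, uniformly in \<open>n\<close>.\<close>

definition uniformly_equicontinuous_whp ::
    "(nat \<Rightarrow> 'a measure) \<Rightarrow> 'b::metric_space set \<Rightarrow> (nat \<Rightarrow> 'a \<Rightarrow> 'b \<Rightarrow> real) \<Rightarrow> bool" where
  "uniformly_equicontinuous_whp M S V \<longleftrightarrow>
     (\<forall>\<eta>>0. \<exists>A B. (\<forall>n. A n \<in> sets (M n) \<and> 1 - \<eta> \<le> measure (M n) (A n)) \<and>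
        (\<forall>n. \<forall>\<omega>\<in>A n. \<forall>x\<in>S. \<bar>V n \<omega> x\<bar> \<le> B) \<and> uniformly_equicontinuous_on S {V n \<omega> |n \<omega>. \<omega> \<in> A n})"

lemma uniformly_equicontinuous_whpI:
  assumes "\<And>\<eta>. 0 < \<eta> \<Longrightarrow> \<eta> < 1 \<Longrightarrow> \<exists>A B. (\<forall>n. A n \<in> sets (M n) \<and> 1 - \<eta> \<le> measure (M n) (A n)) \<and>
        (\<forall>n. \<forall>\<omega>\<in>A n. \<forall>x\<in>S. \<bar>V n \<omega> x\<bar> \<le> B) \<and> uniformly_equicontinuous_on S {V n \<omega> |n \<omega>. \<omega> \<in> A n}"
  shows "uniformly_equicontinuous_whp M S V"
  unfolding uniformly_equicontinuous_whp_def
proof (intro allI impI)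
  fix \<eta> :: real assume "\<eta> > 0"
  show "\<exists>A B. (\<forall>n. A n \<in> sets (M n) \<and> 1 - \<eta> \<le> measure (M n) (A n)) \<and>
      (\<forall>n. \<forall>\<omega>\<in>A n. \<forall>x\<in>S. \<bar>V n \<omega> x\<bar> \<le> B) \<and> uniformly_equicontinuous_on S {V n \<omega> |n \<omega>. \<omega> \<in> A n}"
  proof (cases "\<eta> < 1")
    case False
    then show ?thesis
      by (intro exI[of _ "\<lambda>_. {}"] exI[of _ 0]) (auto simp: uniformly_equicontinuous_on_def)
  qed (use assms \<open>\<eta> > 0\<close> in blast)
qed

lemma sets_Collect_restrict_in_Cspace_bounded_modulus:
  fixes V :: "'a \<Rightarrow> real \<times> real \<Rightarrow> real"
  assumes S: "compact S" and cont: "\<And>\<omega>. \<omega> \<in> space M \<Longrightarrow> continuous_on S (V \<omega>)"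
    and meas: "\<And>x. x \<in> S \<Longrightarrow> (\<lambda>\<omega>. V \<omega> x) \<in> borel_measurable M"
  shows "{\<omega> \<in> space M. restrict (V \<omega>) S \<in> Cspace_bounded_modulus S B \<delta>} \<in> sets M"
proof -
  define P where "P k = {z. fst z \<in> S \<and> snd z \<in> S \<and> dist (fst z) (snd z) < \<delta> k}" for k
  have "{\<omega> \<in> space M. restrict (V \<omega>) S \<in> Cspace_bounded_modulus S B \<delta>} =
      {\<omega> \<in> space M. (\<forall>x\<in>S. \<bar>V \<omega> x\<bar> \<le> B) \<and>
        (\<forall>k. \<forall>z\<in>P k. \<bar>V \<omega> (fst z) - V \<omega> (snd z)\<bar> \<le> 1 / real (Suc k))}"
    using restrict_in_Cspace[OF S cont] by (auto simp: Cspace_bounded_modulus_def P_def)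
  also have "\<dots> \<in> sets M"
  proof (intro sets.sets_Collect_conj sets.sets_Collect_countable_All)
    show "{\<omega> \<in> space M. \<forall>x\<in>S. \<bar>V \<omega> x\<bar> \<le> B} \<in> sets M"
    proof (rule sets_Collect_ball_le_continuous)
      show "continuous_on S (\<lambda>x. \<bar>V \<omega> x\<bar>)" if "\<omega> \<in> space M" for \<omega>
        using cont[OF that] by (intro continuous_intros)
      show "(\<lambda>\<omega>. \<bar>V \<omega> x\<bar>) \<in> borel_measurable M" if "x \<in> S" for x
        using meas[OF that] by measurable
    qed
    fix k
    show "{\<omega> \<in> space M. \<forall>z\<in>P k. \<bar>V \<omega> (fst z) - V \<omega> (snd z)\<bar> \<le> 1 / real (Suc k)} \<in> sets M"
    proof (rule sets_Collect_ball_le_continuous)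
      show "continuous_on (P k) (\<lambda>z. \<bar>V \<omega> (fst z) - V \<omega> (snd z)\<bar>)" if "\<omega> \<in> space M" for \<omega>
      proof -
        have "continuous_on (P k) (\<lambda>z. V \<omega> (fst z))" "continuous_on (P k) (\<lambda>z. V \<omega> (snd z))"
          by (auto simp: P_def intro!: continuous_on_compose2[OF cont[OF that]] continuous_intros)
        then show ?thesis by (intro continuous_intros)
      qed
      show "(\<lambda>\<omega>. \<bar>V \<omega> (fst z) - V \<omega> (snd z)\<bar>) \<in> borel_measurable M" if "z \<in> P k" for z
      proof -
        from that have "fst z \<in> S" "snd z \<in> S" by (auto simp: P_def)
        with meas show ?thesis by measurable
      qed
    qed
  qed
  finally show ?thesis .
qed

lemma tight_C_if_uniformly_equicontinuous_whp:
  fixes V :: "nat \<Rightarrow> 'a \<Rightarrow> real \<times> real \<Rightarrow> real"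
  assumes S: "compact S" and prob: "\<And>n. prob_space (M n)"
    and cont: "\<And>n \<omega>. \<omega> \<in> space (M n) \<Longrightarrow> continuous_on S (V n \<omega>)"
    and meas: "\<And>n x. x \<in> S \<Longrightarrow> (\<lambda>\<omega>. V n \<omega> x) \<in> borel_measurable (M n)"
    and whp: "uniformly_equicontinuous_whp M S V"
  shows "tight_C M S V"
  unfolding tight_C_def
proof (intro allI impI)
  fix \<epsilon> :: real assume "\<epsilon> > 0"
  then obtain A B where A: "\<forall>n. A n \<in> sets (M n) \<and> 1 - \<epsilon> \<le> measure (M n) (A n)"
    and bound: "\<forall>n. \<forall>\<omega>\<in>A n. \<forall>x\<in>S. \<bar>V n \<omega> x\<bar> \<le> B"
    and equi: "uniformly_equicontinuous_on S {V n \<omega> |n \<omega>. \<omega> \<in> A n}"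
    using whp unfolding uniformly_equicontinuous_whp_def by blast
  obtain \<delta> where \<delta>: "\<And>k. \<delta> k > 0"
    and modulus: "\<And>k f x y. f \<in> {V n \<omega> |n \<omega>. \<omega> \<in> A n} \<Longrightarrow> x \<in> S \<Longrightarrow> y \<in> S \<Longrightarrow> dist x y \<le> \<delta> k \<Longrightarrow>
        dist (f x) (f y) \<le> 1 / real (Suc k)"
    using uniformly_equicontinuous_on_modulus_seq[OF equi] by blast
  show "\<exists>K. compactin (mtopology_of (Cspace S)) K \<and>
      (\<forall>n. 1 - \<epsilon> \<le> measure (M n) {\<omega> \<in> space (M n). restrict (V n \<omega>) S \<in> K})"
  proof (intro exI conjI allI)
    show "compactin (mtopology_of (Cspace S)) (Cspace_bounded_modulus S B \<delta>)"
      using S \<delta> by (rule compactin_Cspace_bounded_modulus)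
    fix n
    interpret prob_space "M n" by (rule prob)
    have "A n \<in> sets (M n)" "1 - \<epsilon> \<le> measure (M n) (A n)" using A by auto
    have "A n \<subseteq> {\<omega> \<in> space (M n). restrict (V n \<omega>) S \<in> Cspace_bounded_modulus S B \<delta>}"
      using sets.sets_into_space[OF \<open>A n \<in> sets (M n)\<close>] restrict_in_Cspace[OF S cont] bound
        modulus[of "V n _"] by (fastforce simp: Cspace_bounded_modulus_def dist_real_def)
    then have "measure (M n) (A n) \<le> measure (M n) {\<omega> \<in> space (M n). restrict (V n \<omega>) S \<in> Cspace_bounded_modulus S B \<delta>}"
      using sets_Collect_restrict_in_Cspace_bounded_modulus[OF S cont meas] by (intro finite_measure_mono)
    with \<open>1 - \<epsilon> \<le> measure (M n) (A n)\<close> show "1 - \<epsilon> \<le> measure (M n) {\<omega> \<in> space (M n). restrict (V n \<omega>) S \<in> Cspace_bounded_modulus S B \<delta>}"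
      by linarith
  qed
qed

lemma small_increments_if_uniformly_equicontinuous_whp:
  fixes V :: "nat \<Rightarrow> 'a \<Rightarrow> real \<times> real \<Rightarrow> real"
  assumes prob: "\<And>n. prob_space (M n)"
    and cont: "\<And>n \<omega>. \<omega> \<in> space (M n) \<Longrightarrow> continuous_on (simplex2 T) (V n \<omega>)"
    and meas: "\<And>n x. x \<in> simplex2 T \<Longrightarrow> (\<lambda>\<omega>. V n \<omega> x) \<in> borel_measurable (M n)"
    and diag: "\<And>n \<omega> t. \<omega> \<in> space (M n) \<Longrightarrow> 0 \<le> t \<Longrightarrow> t \<le> T \<Longrightarrow> V n \<omega> (t, t) = 0"
    and whp: "uniformly_equicontinuous_whp M (simplex2 T) V"
  shows "\<forall>\<epsilon>>0. \<exists>\<delta>>0. \<forall>n. measure (M n) {\<omega> \<in> space (M n).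
           \<forall>(s, t) \<in> simplex2 T. t - s \<le> \<delta> \<longrightarrow> V n \<omega> (s, t) \<le> \<epsilon>} > 1 - \<epsilon>"
proof (intro allI impI)
  fix \<epsilon> :: real assume "\<epsilon> > 0"
  then obtain A B where A: "\<And>n. A n \<in> sets (M n)" "\<And>n. 1 - \<epsilon> / 2 \<le> measure (M n) (A n)"
    and equi: "uniformly_equicontinuous_on (simplex2 T) {V n \<omega> |n \<omega>. \<omega> \<in> A n}"
    using whp unfolding uniformly_equicontinuous_whp_def by (meson half_gt_zero)
  obtain h where "h > 0" and h_equi: "\<And>f x y. f \<in> {V n \<omega> |n \<omega>. \<omega> \<in> A n} \<Longrightarrow> x \<in> simplex2 T \<Longrightarrow>
      y \<in> simplex2 T \<Longrightarrow> dist x y \<le> h \<Longrightarrow> dist (f x) (f y) \<le> \<epsilon>"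
    using uniformly_equicontinuous_onD[OF equi \<open>\<epsilon> > 0\<close>] by blast
  have h: "dist (V n \<omega> x) (V n \<omega> y) \<le> \<epsilon>"
    if "\<omega> \<in> A n" "x \<in> simplex2 T" "y \<in> simplex2 T" "dist x y \<le> h" for n \<omega> x y
    using h_equi[of "V n \<omega>" x y] that by blast
  define X where "X = {x \<in> simplex2 T. snd x - fst x \<le> h}"
  have "measure (M n) {\<omega> \<in> space (M n). \<forall>(s, t) \<in> simplex2 T. t - s \<le> h \<longrightarrow> V n \<omega> (s, t) \<le> \<epsilon>} > 1 - \<epsilon>" for n
  proof -
    interpret prob_space "M n" by (rule prob)
    have E: "{\<omega> \<in> space (M n). \<forall>(s, t) \<in> simplex2 T. t - s \<le> h \<longrightarrow> V n \<omega> (s, t) \<le> \<epsilon>}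
        = {\<omega> \<in> space (M n). \<forall>x\<in>X. V n \<omega> x \<le> \<epsilon>}"
      by (auto simp: X_def)
    have "V n \<omega> (s, t) \<le> \<epsilon>" if "\<omega> \<in> A n" "(s, t) \<in> simplex2 T" "t - s \<le> h" for \<omega> s t
    proof -
      have "\<omega> \<in> space (M n)" using sets.sets_into_space[OF A(1)] that(1) by blast
      moreover have "(s, s) \<in> simplex2 T" "dist (s, t) (s, s) \<le> h"
        using that(2,3) by (auto simp: simplex2_def dist_Pair_Pair dist_real_def)
      ultimately show ?thesis
        using h[OF that(1,2)] diag[of \<omega> n s] that(2) by (force simp: simplex2_def dist_real_def)
    qed
    then have "A n \<subseteq> {\<omega> \<in> space (M n). \<forall>x\<in>X. V n \<omega> x \<le> \<epsilon>}"
      using sets.sets_into_space[OF A(1)[of n]] by (auto simp: X_def)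
    moreover have "{\<omega> \<in> space (M n). \<forall>x\<in>X. V n \<omega> x \<le> \<epsilon>} \<in> sets (M n)"
      using cont meas by (intro sets_Collect_ball_le_continuous) (auto simp: X_def intro: continuous_on_subset)
    ultimately have "measure (M n) (A n) \<le> measure (M n) {\<omega> \<in> space (M n). \<forall>x\<in>X. V n \<omega> x \<le> \<epsilon>}"
      by (rule finite_measure_mono)
    with A(2)[of n] \<open>\<epsilon> > 0\<close> show ?thesis unfolding E by linarith
  qed
  with \<open>h > 0\<close> show "\<exists>\<delta>>0. \<forall>n. measure (M n) {\<omega> \<in> space (M n).
      \<forall>(s, t) \<in> simplex2 T. t - s \<le> \<delta> \<longrightarrow> V n \<omega> (s, t) \<le> \<epsilon>} > 1 - \<epsilon>" by blast
qed

lemma uniformly_equicontinuous_whp_pvar_norm: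
  fixes Z :: "nat \<Rightarrow> 'a \<Rightarrow> real \<times> real \<Rightarrow> 'e::real_normed_vector"
  assumes exponents: "0 < p" "p < p'" and prob: "\<And>n. prob_space (M n)"
    and diag: "\<And>n \<omega> t. \<omega> \<in> space (M n) \<Longrightarrow> 0 \<le> t \<Longrightarrow> t \<le> T \<Longrightarrow> Z n \<omega> (t, t) = 0"
    and finvar: "\<And>n \<omega>. \<omega> \<in> space (M n) \<Longrightarrow> finite_pvar p (Z n \<omega>) 0 T"
    and tightZ: "tight_C M (simplex2 T) Z"
    and tightV: "tight_R M (\<lambda>n \<omega>. pvar_norm p (Z n \<omega>) 0 T)"
  shows "uniformly_equicontinuous_whp M (simplex2 T) (\<lambda>n \<omega>. case_prod (pvar_norm p' (Z n \<omega>)))"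
proof (rule uniformly_equicontinuous_whpI)
  fix \<eta> :: real assume "0 < \<eta>" "\<eta> < 1"
  then have "\<eta> / 2 > 0" by simp
  then obtain K where K: "compactin (mtopology_of (Cspace (simplex2 T))) K"
    and K_prob: "\<And>n. 1 - \<eta> / 2 \<le> measure (M n) {\<omega> \<in> space (M n). restrict (Z n \<omega>) (simplex2 T) \<in> K}"
    using tightZ unfolding tight_C_def by blast
  obtain C where "compact C"
    and C_prob: "\<And>n. 1 - \<eta> / 2 \<le> measure (M n) {\<omega> \<in> space (M n). pvar_norm p (Z n \<omega>) 0 T \<in> C}"
    using tightV \<open>\<eta> / 2 > 0\<close> unfolding tight_R_def by blast
  then obtain R where R: "\<And>x. x \<in> C \<Longrightarrow> x \<le> R"
    using compact_imp_bounded[of C] unfolding bounded_real by (meson abs_le_D1)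
  define A where "A n = {\<omega> \<in> space (M n). restrict (Z n \<omega>) (simplex2 T) \<in> K} \<inter>
      {\<omega> \<in> space (M n). pvar_norm p (Z n \<omega>) 0 T \<in> C}" for n
  have A: "A n \<in> sets (M n) \<and> 1 - \<eta> \<le> measure (M n) (A n)" for n
    using prob_space.prob_Int_ge[OF prob K_prob C_prob] \<open>\<eta> < 1\<close> by (simp add: A_def)
  have family: "Z n \<omega> \<in> pvar_family T p K (R powr p)" if "\<omega> \<in> A n" for n \<omega>
  proof -
    from that have \<omega>: "\<omega> \<in> space (M n)" "restrict (Z n \<omega>) (simplex2 T) \<in> K" "pvar_norm p (Z n \<omega>) 0 T \<in> C"
      by (auto simp: A_def)
    have "x \<le> R powr p" if "x \<in> pvar_sums p (Z n \<omega>) 0 T" for x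
      using pvar_sums_le_of_pvar_norm_le[OF exponents(1) finvar[OF \<omega>(1)] R[OF \<omega>(3)] that] .
    with \<omega> diag[OF \<omega>(1)] show ?thesis by (simp add: pvar_family_def)
  qed
  obtain B where B: "\<And>G x. G \<in> pvar_family T p K (R powr p) \<Longrightarrow> x \<in> simplex2 T \<Longrightarrow>
      \<bar>case_prod (pvar_norm p' G) x\<bar> \<le> B"
    and equi: "uniformly_equicontinuous_on (simplex2 T)
      ((\<lambda>G. case_prod (pvar_norm p' G)) ` pvar_family T p K (R powr p))"
    using pvar_family_pvar_norm[OF K exponents, of "R powr p"] by auto
  have "{case_prod (pvar_norm p' (Z n \<omega>)) |n \<omega>. \<omega> \<in> A n}
      \<subseteq> (\<lambda>G. case_prod (pvar_norm p' G)) ` pvar_family T p K (R powr p)"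
    using family by blast
  with equi have "uniformly_equicontinuous_on (simplex2 T) {case_prod (pvar_norm p' (Z n \<omega>)) |n \<omega>. \<omega> \<in> A n}"
    unfolding uniformly_equicontinuous_on_def by (meson subsetD)
  with A B family show "\<exists>A B. (\<forall>n. A n \<in> sets (M n) \<and> 1 - \<eta> \<le> measure (M n) (A n)) \<and>
      (\<forall>n. \<forall>\<omega>\<in>A n. \<forall>x\<in>simplex2 T. \<bar>case_prod (pvar_norm p' (Z n \<omega>)) x\<bar> \<le> B) \<and>
      uniformly_equicontinuous_on (simplex2 T) {case_prod (pvar_norm p' (Z n \<omega>)) |n \<omega>. \<omega> \<in> A n}"
    by blast
qed

theorem lemma21:
  fixes T p :: real
    and M :: "nat \<Rightarrow> 'a measure"
    and Z :: "nat \<Rightarrow> 'a \<Rightarrow> real \<times> real \<Rightarrow> 'e::{banach, second_countable_topology}"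
  assumes p: "p \<ge> 1"
    and prob: "\<And>n. prob_space (M n)"
    and meas: "\<And>n s t. (s, t) \<in> simplex2 T \<Longrightarrow> (\<lambda>\<omega>. Z n \<omega> (s, t)) \<in> borel_measurable (M n)"
    and cont: "\<And>n \<omega>. \<omega> \<in> space (M n) \<Longrightarrow> continuous_on (simplex2 T) (Z n \<omega>)"
    and diag: "\<And>n \<omega> t. \<omega> \<in> space (M n) \<Longrightarrow> 0 \<le> t \<Longrightarrow> t \<le> T \<Longrightarrow> Z n \<omega> (t, t) = 0"
    and finvar: "\<And>n \<omega>. \<omega> \<in> space (M n) \<Longrightarrow> finite_pvar p (Z n \<omega>) 0 T"
    and tightZ: "tight_C M (simplex2 T) Z"
    and tightV: "tight_R M (\<lambda>n \<omega>. pvar_norm p (Z n \<omega>) 0 T)"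
  shows "\<forall>p'>p.
     (\<forall>n. \<forall>\<omega>\<in>space (M n). continuous_on (simplex2 T) (\<lambda>(s, t). pvar_norm p' (Z n \<omega>) s t)) \<and>
     tight_C M (simplex2 T) (\<lambda>n \<omega> (s, t). pvar_norm p' (Z n \<omega>) s t) \<and>
     (\<forall>\<epsilon>>0. \<exists>\<delta>>0. \<forall>n.
        measure (M n) {\<omega> \<in> space (M n).
           \<forall>(s, t) \<in> simplex2 T. t - s \<le> \<delta> \<longrightarrow> pvar_norm p' (Z n \<omega>) s t \<le> \<epsilon>} > 1 - \<epsilon>)"
proof (intro allI impI)
  fix p' assume "p < p'"
  with p have exponents: "0 < p" "p < p'" by auto
  define V where "V n \<omega> = case_prod (pvar_norm p' (Z n \<omega>))" for n \<omega>
  have cont_V: "continuous_on (simplex2 T) (V n \<omega>)" if "\<omega> \<in> space (M n)" for n \<omega>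
    unfolding V_def using exponents cont[OF that] diag[OF that] finvar[OF that]
    by (rule continuous_on_pvar_norm)
  have meas_V: "(\<lambda>\<omega>. V n \<omega> x) \<in> borel_measurable (M n)" if "x \<in> simplex2 T" for n x
    using that meas cont exponents bdd_above_pvar_sums_of_finite_pvar[OF _ _ cont finvar]
    by (cases x) (auto simp: V_def intro!: pvar_norm_measurable)
  have whp: "uniformly_equicontinuous_whp M (simplex2 T) V"
    unfolding V_def using exponents prob diag finvar tightZ tightV by (rule uniformly_equicontinuous_whp_pvar_norm)
  have tight: "tight_C M (simplex2 T) V"
    using compact_simplex2 prob cont_V meas_V whp by (rule tight_C_if_uniformly_equicontinuous_whp)
  have small: "\<forall>\<epsilon>>0. \<exists>\<delta>>0. \<forall>n. measure (M n) {\<omega> \<in> space (M n).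
      \<forall>(s, t) \<in> simplex2 T. t - s \<le> \<delta> \<longrightarrow> V n \<omega> (s, t) \<le> \<epsilon>} > 1 - \<epsilon>"
  proof (rule small_increments_if_uniformly_equicontinuous_whp[OF prob cont_V meas_V _ whp])
    show "V n \<omega> (t, t) = 0" for n \<omega> t by (simp add: V_def pvar_norm_same_endpoints)
  qed
  show "(\<forall>n. \<forall>\<omega>\<in>space (M n). continuous_on (simplex2 T) (\<lambda>(s, t). pvar_norm p' (Z n \<omega>) s t)) \<and>
     tight_C M (simplex2 T) (\<lambda>n \<omega> (s, t). pvar_norm p' (Z n \<omega>) s t) \<and>
     (\<forall>\<epsilon>>0. \<exists>\<delta>>0. \<forall>n. measure (M n) {\<omega> \<in> space (M n).
        \<forall>(s, t) \<in> simplex2 T. t - s \<le> \<delta> \<longrightarrow> pvar_norm p' (Z n \<omega>) s t \<le> \<epsilon>} > 1 - \<epsilon>)"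
    using cont_V tight small unfolding V_def by (intro conjI ballI allI) auto
qed

end
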